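(* Let $N\ge 2$ and $L\ge 1$ be integers, and let $R_{12}(\xi_1,\xi_2)$ be an $R$-matrix acting on $V_1\otimes V_2$, $V_j\cong\mathbb{C}^N$, of the form $$R_{12}(\xi_1,\xi_2)=\sum_{i=1}^N a_i(\xi_1,\xi_2)\,e^{(ii)}_1\otimes e^{(ii)}_2+\sum_{i\neq j} b_{ij}(\xi_1,\xi_2)\,e^{(ii)}_1\otimes e^{(jj)}_2+\sum_{i\ne j} c_{ij}(\xi_1,\xi_2)\,e^{(ij)}_1\otimes e^{(ji)}_2,$$ with arbitrary (complex-valued) weights $a_i,b_{ij},c_{ij}$, the $a_i$ nonvanishing, satisfying the Yang–Baxter equation $R_{12}(\xi_1,\xi_2)R_{13}(\xi_1,\xi_3)R_{23}(\xi_2,\xi_3)=R_{23}(\xi_2,\xi_3)R_{13}(\xi_1,\xi_3)R_{12}(\xi_1,\xi_2)$ and the unitarity condition $R_{12}(\xi_1,\xi_2)R_{21}(\xi_2,\xi_1)=\mathcal I_1\otimes\mathcal I_2$. Define $F_{1\dots L}=F_{1\dots L}(\xi_1,\dots,\xi_L)$ on $V_1\otimes\cdots\otimes V_L$ by $F_{1\dots L}=\mathcal N_{1\dots L}\mathcal F_{1\dots L}$, where $$\mathcal N_{1\dots L}=\mathcal N_{(L-1)L}\,\mathcal N_{L-2,(L-1)L}\cdots\mathcal N_{1,2\dots L},\qquad \mathcal N_{i,(i+1)\dots L}=\mathcal N_{iL}\mathcal N_{i(L-1)}\cdots\mathcal N_{i(i+1)},$$ $$\mathcal N_{ij}=\mathcal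 I_i\otimes\mathcal I_j-\sum_{k=1}^N e^{(kk)}_i\otimes e^{(kk)}_j+\sum_{k=1}^N\sqrt{a_k(\xi_i,\xi_j)}\,e^{(kk)}_i\otimes e^{(kk)}_j,$$ and $$\mathcal F_{1\dots L}=\sum_{\sigma\in S_L}\ \sum^{*}_{1\le\alpha_{\sigma(1)},\dots,\alpha_{\sigma(L)}\le N}\ \bigotimes_{i=1}^L e^{(\alpha_i\alpha_i)}_i\ R^{\{\sigma\}}_{1\dots L},$$ where the starred sum runs over all sequences with $\alpha_{\sigma(i)}\le\alpha_{\sigma(i+1)}$ if $\sigma(i)<\sigma(i+1)$ and $\alpha_{\sigma(i)}<\alpha_{\sigma(i+1)}$ if $\sigma(i)>\sigma(i+1)$, for $i=1,\dots,L-1$. Then for every permutation $\sigma\in S_L$ the factorization condition $$F_{\sigma(1)\dots\sigma(L)}(\xi_{\sigma(1)},\dots,\xi_{\sigma(L)})\,R^{\{\sigma\}}_{1\dots L}(\xi_1,\dots,\xi_L)=F_{1\dots L}(\xi_1,\dots,\xi_L)$$ holds.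
   Context: $e^{(\alpha\beta)}_j$ denotes the $N\times N$ Weyl matrix (1 in entry $(\alpha,\beta)$, 0 elsewhere) acting on $V_j$, and $\mathcal I_j$ the identity on $V_j$. $R_{jk}(\xi_j,\xi_k)$ denotes the $R$-matrix acting on the factors $V_j\otimes V_k$ with parameters $\xi_j,\xi_k$. $P_{\alpha(\alpha+1)}$ is the permutation operator exchanging the factors $V_\alpha,V_{\alpha+1}$. For $\sigma\in S_L$ written in a minimal decomposition into adjacent transpositions $\sigma=\sigma_{\alpha_p(\alpha_p+1)}\cdots\sigma_{\alpha_1(\alpha_1+1)}$, one sets $R^{\{\sigma\}}_{1\dots L}=P^{\{\sigma\}}_{1\dots L}\hat R^{\{\sigma^{-1}\}}_{1\dots L}$ with $P^{\{\sigma\}}_{1\dots L}=P_{\alpha_p(\alpha_p+1)}\cdots P_{\alpha_1(\alpha_1+1)}$, $\hat R^{\{\sigma^{-1}\}}_{1\dots L}=\hat R_{\alpha_1}\hat R_{\alpha_2}\cdots\hat R_{\alpha_p}$ and $\hat R_{\alpha}=P_{\alpha(\alpha+1)}R_{\alpha(\alpha+1)}(\xi_\alpha,\xi_{\alpha+1})$; $R^{\{\mathrm{id}\}}$ is the identity. For an operator $X_{1\dots L}(\xi_1,\dots,\xi_L)$, $X_{\sigma(1)\dots\sigma(L)}(\xi_{\sigma(1)},\dots,\xi_{\sigma(L)})$ denotes the same operator with its spaces and parameters relabelled by $\sigma$, i.e. $P^{\{\sigma\}}_{1\dots L}X_{1\dots L}P^{\{\sigma^{-1}\}}_{1\dots L}$.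 The square roots are chosen so that $\sqrt{a_k(\xi_i,\xi_j)}\sqrt{a_k(\xi_j,\xi_i)}=1$ (compatible with unitarity, which gives $a_k(\xi_i,\xi_j)a_k(\xi_j,\xi_i)=1$). *)

theory Defs
  imports Complex_Main "HOL-Combinatorics.Permutations"
begin

text \<open>Operators on V_0 \<otimes> ... \<otimes> V_(L-1), V_j = C^N, are represented by their
  matrices, indexed by basis tuples (lists of length L with entries < N).
  Sites and colours are 0-based.\<close>

type_synonym op = "nat list \<Rightarrow> nat list \<Rightarrow> complex"

definition tuples :: "nat \<Rightarrow> nat \<Rightarrow> nat list set" where
  "tuples N L = {xs. length xs = L \<and> (\<forall>x\<in>set xs. x < N)}"

definition mmul :: "nat \<Rightarrow> nat \<Rightarrow> op \<Rightarrow> op \<Rightarrow> op" where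
  "mmul N L A B xs ys = (\<Sum>zs\<in>tuples N L. A xs zs * B zs ys)"

definition idop :: op where
  "idop xs ys = (if xs = ys then 1 else 0)"

definition opeq :: "nat \<Rightarrow> nat \<Rightarrow> op \<Rightarrow> op \<Rightarrow> bool" where
  "opeq N L A B \<longleftrightarrow> (\<forall>xs\<in>tuples N L. \<forall>ys\<in>tuples N L. A xs ys = B xs ys)"

definition mprod :: "nat \<Rightarrow> nat \<Rightarrow> op list \<Rightarrow> op" where
  "mprod N L As = foldr (mmul N L) As idop"

text \<open>Embedding of a two-site matrix M (entry M \<alpha> \<beta> \<alpha>' \<beta>' for the matrix element
  ((\<alpha>,\<beta>),(\<alpha>',\<beta>')) of V_j \<otimes> V_k) acting on sites j (first factor) and k.\<close>
definition emb :: "nat \<Rightarrow> nat \<Rightarrow> nat \<Rightarrow> (nat \<Rightarrow> nat \<Rightarrow> nat \<Rightarrow> nat \<Rightarrow> complex) \<Rightarrow> op" where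
  "emb L j k M xs ys =
     (if (\<forall>m<L. m \<noteq> j \<longrightarrow> m \<noteq> k \<longrightarrow> xs ! m = ys ! m)
      then M (xs ! j) (xs ! k) (ys ! j) (ys ! k) else 0)"

definition Rmat :: "(nat \<Rightarrow> 'p \<Rightarrow> 'p \<Rightarrow> complex) \<Rightarrow> (nat \<Rightarrow> nat \<Rightarrow> 'p \<Rightarrow> 'p \<Rightarrow> complex)
    \<Rightarrow> (nat \<Rightarrow> nat \<Rightarrow> 'p \<Rightarrow> 'p \<Rightarrow> complex) \<Rightarrow> 'p \<Rightarrow> 'p \<Rightarrow> nat \<Rightarrow> nat \<Rightarrow> nat \<Rightarrow> nat \<Rightarrow> complex" where
  "Rmat a b c x y \<alpha> \<beta> \<alpha>' \<beta>' =
     (if \<alpha> = \<beta> \<and> \<alpha>' = \<alpha> \<and> \<beta>' = \<beta> then a \<alpha> x y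
      else if \<alpha>' = \<alpha> \<and> \<beta>' = \<beta> then b \<alpha> \<beta> x y
      else if \<alpha>' = \<beta> \<and> \<beta>' = \<alpha> then c \<alpha> \<beta> x y
      else 0)"

definition Rop :: "(nat \<Rightarrow> 'p \<Rightarrow> 'p \<Rightarrow> complex) \<Rightarrow> (nat \<Rightarrow> nat \<Rightarrow> 'p \<Rightarrow> 'p \<Rightarrow> complex)
    \<Rightarrow> (nat \<Rightarrow> nat \<Rightarrow> 'p \<Rightarrow> 'p \<Rightarrow> complex) \<Rightarrow> nat \<Rightarrow> nat \<Rightarrow> nat \<Rightarrow> 'p \<Rightarrow> 'p \<Rightarrow> op" where
  "Rop a b c L j k x y = emb L j k (Rmat a b c x y)"

definition Pswap :: "nat \<Rightarrow> nat \<Rightarrow> nat \<Rightarrow> op" where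
  "Pswap L j k = emb L j k (\<lambda>\<alpha> \<beta> \<alpha>' \<beta>'. if \<alpha>' = \<beta> \<and> \<beta>' = \<alpha> then 1 else 0)"

text \<open>P^{\<sigma>}: the tensor-factor permutation operator sending the factor at site i
  to site \<sigma> i (a homomorphism, so P^{\<sigma>} = P_{\<alpha>_p(\<alpha>_p+1)} ... P_{\<alpha>_1(\<alpha>_1+1)}).\<close>
definition Pmat :: "nat \<Rightarrow> (nat \<Rightarrow> nat) \<Rightarrow> op" where
  "Pmat L \<sigma> xs ys = (if \<forall>i<L. xs ! (\<sigma> i) = ys ! i then 1 else 0)"

definition adjsw :: "nat \<Rightarrow> nat \<Rightarrow> nat" where
  "adjsw \<beta> i = (if i = \<beta> then Suc \<beta> else if i = Suc \<beta> then \<beta> else i)"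

text \<open>\<beta>s = [\<beta>_1,...,\<beta>_k] is a decomposition of \<sigma> = s_{\<beta>_1} \<circ> ... \<circ> s_{\<beta>_k} into adjacent
  transpositions (so \<beta>s = [\<alpha>_p, ..., \<alpha>_1] in the paper's notation).\<close>
definition is_decomp :: "nat \<Rightarrow> (nat \<Rightarrow> nat) \<Rightarrow> nat list \<Rightarrow> bool" where
  "is_decomp L \<sigma> \<beta>s \<longleftrightarrow> (\<forall>\<beta>\<in>set \<beta>s. Suc \<beta> < L) \<and> foldr (\<lambda>\<beta> f. adjsw \<beta> \<circ> f) \<beta>s id = \<sigma>"

definition min_decomp :: "nat \<Rightarrow> (nat \<Rightarrow> nat) \<Rightarrow> nat list" where
  "min_decomp L \<sigma> = (SOME \<beta>s. is_decomp L \<sigma> \<beta>s \<and> (\<forall>\<gamma>s. is_decomp L \<sigma> \<gamma>s \<longrightarrow> length \<beta>s \<le> length \<gamma>s))"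

definition Rhat :: "nat \<Rightarrow> nat \<Rightarrow> (nat \<Rightarrow> 'p \<Rightarrow> 'p \<Rightarrow> complex) \<Rightarrow> (nat \<Rightarrow> nat \<Rightarrow> 'p \<Rightarrow> 'p \<Rightarrow> complex)
    \<Rightarrow> (nat \<Rightarrow> nat \<Rightarrow> 'p \<Rightarrow> 'p \<Rightarrow> complex) \<Rightarrow> (nat \<Rightarrow> 'p) \<Rightarrow> nat \<Rightarrow> op" where
  "Rhat N L a b c \<xi> \<beta> = mmul N L (Pswap L \<beta> (Suc \<beta>)) (Rop a b c L \<beta> (Suc \<beta>) (\<xi> \<beta>) (\<xi> (Suc \<beta>)))"

text \<open>\<hat>R^{\<sigma>^{-1}} = \<hat>R_{\<alpha>_1} ... \<hat>R_{\<alpha>_p}, read as a braid product: each factor uses the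
  parameters currently sitting at its two positions (the rightmost factor acts first,
  with \<xi>, and each \<hat>R_\<beta> exchanges the parameters at positions \<beta>, \<beta>+1).\<close>
fun hatprod :: "nat \<Rightarrow> nat \<Rightarrow> (nat \<Rightarrow> 'p \<Rightarrow> 'p \<Rightarrow> complex) \<Rightarrow> (nat \<Rightarrow> nat \<Rightarrow> 'p \<Rightarrow> 'p \<Rightarrow> complex)
    \<Rightarrow> (nat \<Rightarrow> nat \<Rightarrow> 'p \<Rightarrow> 'p \<Rightarrow> complex) \<Rightarrow> (nat \<Rightarrow> 'p) \<Rightarrow> nat list \<Rightarrow> op" where
  "hatprod N L a b c \<xi> [] = idop"
| "hatprod N L a b c \<xi> (\<beta> # \<beta>s) =
     mmul N L (hatprod N L a b c (\<xi> \<circ> adjsw \<beta>) \<beta>s) (Rhat N L a b c \<xi> \<beta>)"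

text \<open>R^{\<sigma>}_{1...L}(\<xi>) = P^{\<sigma>} \<hat>R^{\<sigma>^{-1}}.\<close>
definition Rsig :: "nat \<Rightarrow> nat \<Rightarrow> (nat \<Rightarrow> 'p \<Rightarrow> 'p \<Rightarrow> complex) \<Rightarrow> (nat \<Rightarrow> nat \<Rightarrow> 'p \<Rightarrow> 'p \<Rightarrow> complex)
    \<Rightarrow> (nat \<Rightarrow> nat \<Rightarrow> 'p \<Rightarrow> 'p \<Rightarrow> complex) \<Rightarrow> (nat \<Rightarrow> 'p) \<Rightarrow> (nat \<Rightarrow> nat) \<Rightarrow> op" where
  "Rsig N L a b c \<xi> \<sigma> = mmul N L (Pmat L \<sigma>) (hatprod N L a b c \<xi> (min_decomp L \<sigma>))"

text \<open>\<N>_{ij} = I - sum_k e^(kk)_i e^(kk)_j + sum_k sqrt(a_k(\<xi>_i,\<xi>_j)) e^(kk)_i e^(kk)_j,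
  with sq k x y the chosen square root of a k x y.\<close>
definition Nij :: "nat \<Rightarrow> (nat \<Rightarrow> 'p \<Rightarrow> 'p \<Rightarrow> complex) \<Rightarrow> (nat \<Rightarrow> 'p) \<Rightarrow> nat \<Rightarrow> nat \<Rightarrow> op" where
  "Nij L sq \<xi> i j = emb L i j (\<lambda>\<alpha> \<beta> \<alpha>' \<beta>'. if \<alpha>' = \<alpha> \<and> \<beta>' = \<beta>
       then (if \<alpha> = \<beta> then sq \<alpha> (\<xi> i) (\<xi> j) else 1) else 0)"

definition Nrow :: "nat \<Rightarrow> nat \<Rightarrow> (nat \<Rightarrow> 'p \<Rightarrow> 'p \<Rightarrow> complex) \<Rightarrow> (nat \<Rightarrow> 'p) \<Rightarrow> nat \<Rightarrow> op" where
  "Nrow N L sq \<xi> i = mprod N L (map (\<lambda>j. Nij L sq \<xi> i j) (rev [Suc i..<L]))"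

definition Ncal :: "nat \<Rightarrow> nat \<Rightarrow> (nat \<Rightarrow> 'p \<Rightarrow> 'p \<Rightarrow> complex) \<Rightarrow> (nat \<Rightarrow> 'p) \<Rightarrow> op" where
  "Ncal N L sq \<xi> = mprod N L (map (\<lambda>i. Nrow N L sq \<xi> i) (rev [0..<L - 1]))"

definition starcond :: "nat \<Rightarrow> (nat \<Rightarrow> nat) \<Rightarrow> nat list \<Rightarrow> bool" where
  "starcond L \<sigma> \<alpha> \<longleftrightarrow> (\<forall>i. Suc i < L \<longrightarrow>
      (if \<sigma> i < \<sigma> (Suc i) then \<alpha> ! (\<sigma> i) \<le> \<alpha> ! (\<sigma> (Suc i))
       else \<alpha> ! (\<sigma> i) < \<alpha> ! (\<sigma> (Suc i))))"

definition proj :: "nat list \<Rightarrow> op" where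
  "proj \<alpha> xs ys = (if xs = \<alpha> \<and> ys = \<alpha> then 1 else 0)"

definition Fcal :: "nat \<Rightarrow> nat \<Rightarrow> (nat \<Rightarrow> 'p \<Rightarrow> 'p \<Rightarrow> complex) \<Rightarrow> (nat \<Rightarrow> nat \<Rightarrow> 'p \<Rightarrow> 'p \<Rightarrow> complex)
    \<Rightarrow> (nat \<Rightarrow> nat \<Rightarrow> 'p \<Rightarrow> 'p \<Rightarrow> complex) \<Rightarrow> (nat \<Rightarrow> 'p) \<Rightarrow> op" where
  "Fcal N L a b c \<xi> xs ys =
     (\<Sum>\<sigma>\<in>{\<sigma>. \<sigma> permutes {0..<L}}. \<Sum>\<alpha>\<in>{\<alpha>\<in>tuples N L. starcond L \<sigma> \<alpha>}.
        mmul N L (proj \<alpha>) (Rsig N L a b c \<xi> \<sigma>) xs ys)"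

definition Fop :: "nat \<Rightarrow> nat \<Rightarrow> (nat \<Rightarrow> 'p \<Rightarrow> 'p \<Rightarrow> complex) \<Rightarrow> (nat \<Rightarrow> nat \<Rightarrow> 'p \<Rightarrow> 'p \<Rightarrow> complex)
    \<Rightarrow> (nat \<Rightarrow> nat \<Rightarrow> 'p \<Rightarrow> 'p \<Rightarrow> complex) \<Rightarrow> (nat \<Rightarrow> 'p \<Rightarrow> 'p \<Rightarrow> complex) \<Rightarrow> (nat \<Rightarrow> 'p) \<Rightarrow> op" where
  "Fop N L a b c sq \<xi> = mmul N L (Ncal N L sq \<xi>) (Fcal N L a b c \<xi>)"

text \<open>Relabelling X_{\<sigma>(1)...\<sigma>(L)}(\<xi>_{\<sigma>(1)},...,\<xi>_{\<sigma>(L)}) = P^{\<sigma>} X(\<xi> \<circ> \<sigma>) P^{\<sigma>^{-1}}.\<close>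
definition relabel :: "nat \<Rightarrow> nat \<Rightarrow> (nat \<Rightarrow> nat) \<Rightarrow> op \<Rightarrow> op" where
  "relabel N L \<sigma> X = mmul N L (Pmat L \<sigma>) (mmul N L X (Pmat L (inv \<sigma>)))"

end

theory Submission
  imports Defs "HOL-Library.Product_Lexorder"
begin

text \<open>Ncal is diagonal, and in Fcal only the summand of the stable sorting permutation r of a
  colour tuple x survives, so row x of F is Nfactor x times row (sort x) of
  H \<xi> r = hat R^{r^{-1}}(\<xi>). By unitarity, far commutativity and the Yang-Baxter equation, products
  of hat R's along words of adjacent transpositions depend only on the permutation they represent
  (Matsumoto's theorem), so H is well defined and satisfies the cocycle rule
  H \<xi> (s \<circ> t) = H (\<xi> \<circ> s) t \<cdot> H \<xi> s. Hence row x of the relabelled F times R^{\<sigma>} is Nfactor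
  times row (sort x) of H \<xi> (r \<circ> p) = H (\<xi> \<circ> r) p \<cdot> H \<xi> r, where p fixes the sorted tuple. Such
  a p is a product of hat R's at adjacent sites of equal colour, each acting as the scalar a_k,
  and these scalars are cancelled by the square roots in Nfactor.\<close>

section \<open>Operators on the chain\<close>

text \<open>Only entries indexed by tuples matter (cf. opeq); restr zeroes all others, so that operator
  identities can be stated as equations of functions.\<close>
definition restr :: "nat \<Rightarrow> nat \<Rightarrow> op \<Rightarrow> op" where
  "restr N L A xs ys = (if xs \<in> tuples N L \<and> ys \<in> tuples N L then A xs ys else 0)"

definition restricted :: "nat \<Rightarrow> nat \<Rightarrow> op \<Rightarrow> bool" where
  "restricted N L A \<longleftrightarrow> restr N L A = A"

lemma finite_tuples [simp]: "finite (tuples N L)"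
proof -
  have "tuples N L \<subseteq> {xs. set xs \<subseteq> {0..<N} \<and> length xs = L}"
    by (auto simp: tuples_def)
  moreover have "finite {xs. set xs \<subseteq> {0..<N} \<and> length xs = L}"
    by (rule finite_lists_length_eq) simp
  ultimately show ?thesis by (rule finite_subset)
qed

lemma tuplesD: "xs \<in> tuples N L \<Longrightarrow> length xs = L" "xs \<in> tuples N L \<Longrightarrow> i < L \<Longrightarrow> xs ! i < N"
  by (auto simp: tuples_def)

lemma tuplesI: "length xs = L \<Longrightarrow> (\<And>i. i < L \<Longrightarrow> xs ! i < N) \<Longrightarrow> xs \<in> tuples N L"
  by (auto simp: tuples_def in_set_conv_nth)

lemma tuples_eqI:
  "xs \<in> tuples N L \<Longrightarrow> ys \<in> tuples N L \<Longrightarrow> (\<And>i. i < L \<Longrightarrow> xs ! i = ys ! i) \<Longrightarrow> xs = ys"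
  by (auto simp: tuples_def intro: nth_equalityI)

lemma mmul_assoc: "mmul N L (mmul N L A B) C = mmul N L A (mmul N L B C)"
  unfolding mmul_def
  by (auto simp: fun_eq_iff sum_distrib_left sum_distrib_right mult.assoc intro: sum.swap)

lemma mmul_left_commute:
  "mmul N L X Y = mmul N L Y X \<Longrightarrow> mmul N L X (mmul N L Y Z) = mmul N L Y (mmul N L X Z)"
  by (metis mmul_assoc)

lemma mmul_cong_tuples:
  assumes "\<And>zs. zs \<in> tuples N L \<Longrightarrow> A xs zs = A' xs zs"
      and "\<And>zs. zs \<in> tuples N L \<Longrightarrow> B zs ys = B' zs ys"
  shows "mmul N L A B xs ys = mmul N L A' B' xs ys"
  unfolding mmul_def using assms by simp

lemma restr_mmul: "restr N L (mmul N L A B) = mmul N L (restr N L A) (restr N L B)"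
  unfolding restr_def mmul_def fun_eq_iff by (auto intro!: sum.cong)

lemma restr_eqD:
  "restr N L A = restr N L B \<Longrightarrow> xs \<in> tuples N L \<Longrightarrow> ys \<in> tuples N L \<Longrightarrow> A xs ys = B xs ys"
  by (drule fun_cong[of _ _ xs], drule fun_cong[of _ _ ys]) (simp add: restr_def)

lemma restricted_restr [simp]: "restricted N L (restr N L A)"
  by (simp add: restricted_def restr_def fun_eq_iff)

lemma restricted_mmul [simp]:
  "restricted N L A \<Longrightarrow> restricted N L B \<Longrightarrow> restricted N L (mmul N L A B)"
  by (simp add: restricted_def restr_mmul)

lemma sum_eq_single:
  assumes "finite S" "z \<in> S" "\<And>x. x \<in> S \<Longrightarrow> x \<noteq> z \<Longrightarrow> f x = 0"
  shows "sum f S = f z"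
proof -
  have "sum f S = f z + sum f (S - {z})" using assms by (simp add: sum.remove)
  also have "sum f (S - {z}) = 0" using assms by (intro sum.neutral) auto
  finally show ?thesis by simp
qed

lemma mmul_idop_left:
  assumes "restricted N L A"
  shows "mmul N L (restr N L idop) A = A"
proof -
  have "mmul N L (restr N L idop) (restr N L A) xs ys = restr N L A xs ys" for xs ys
  proof (cases "xs \<in> tuples N L")
    case True
    then show ?thesis unfolding mmul_def
      by (subst sum_eq_single[where z=xs]) (auto simp: restr_def idop_def)
  qed (auto simp: mmul_def restr_def)
  then show ?thesis using assms by (auto simp: restricted_def)
qed

lemma mmul_idop_right:
  assumes "restricted N L A"
  shows "mmul N L A (restr N L idop) = A"
proof -
  have "mmul N L (restr N L A) (restr N L idop) xs ys = restr N L A xs ys" for xs ys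
  proof (cases "ys \<in> tuples N L")
    case True
    then show ?thesis unfolding mmul_def
      by (subst sum_eq_single[where z=ys]) (auto simp: restr_def idop_def)
  qed (auto simp: mmul_def restr_def)
  then show ?thesis using assms by (auto simp: restricted_def)
qed

section \<open>Words of adjacent transpositions\<close>

definition word_perm :: "nat list \<Rightarrow> nat \<Rightarrow> nat" where
  "word_perm w = foldr (\<lambda>\<beta> f. adjsw \<beta> \<circ> f) w id"

lemma word_perm_Nil [simp]: "word_perm [] = id"
  by (simp add: word_perm_def)

lemma word_perm_Cons [simp]: "word_perm (b # w) = adjsw b \<circ> word_perm w"
  by (simp add: word_perm_def)

lemma word_perm_append: "word_perm (u @ v) = word_perm u \<circ> word_perm v"
  by (induction u) (auto simp: word_perm_def)

lemma adjsw_adjsw [simp]: "adjsw b (adjsw b x) = x"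
  by (simp add: adjsw_def)

lemma adjsw_o_adjsw [simp]: "adjsw b \<circ> adjsw b = id"
  by (simp add: fun_eq_iff)

lemma adjsw_comm: "Suc b < g \<Longrightarrow> adjsw b \<circ> adjsw g = adjsw g \<circ> adjsw b"
  by (auto simp: fun_eq_iff adjsw_def)

lemma adjsw_braid: "adjsw b \<circ> adjsw (Suc b) \<circ> adjsw b = adjsw (Suc b) \<circ> adjsw b \<circ> adjsw (Suc b)"
  by (auto simp: fun_eq_iff adjsw_def)

lemma adjsw_permutes: "Suc b < L \<Longrightarrow> adjsw b permutes {0..<L}"
  apply (rule bij_imp_permutes)
   apply (rule bij_betw_byWitness[where f'="adjsw b"])
  by (auto simp: adjsw_def)

lemma word_perm_permutes: "\<forall>b\<in>set w. Suc b < L \<Longrightarrow> word_perm w permutes {0..<L}"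
  by (induction w) (auto simp: permutes_id intro: permutes_compose adjsw_permutes)

definition cyc :: "nat \<Rightarrow> nat \<Rightarrow> nat \<Rightarrow> nat" where
  "cyc k m j = (if j = m then k else if k \<le> j \<and> j < m then Suc j else j)"

definition cyc_inv :: "nat \<Rightarrow> nat \<Rightarrow> nat \<Rightarrow> nat" where
  "cyc_inv k m j = (if j = k then m else if k < j \<and> j \<le> m then j - 1 else j)"

text \<open>A canonical word for a permutation p of {0..m}: the cycle [p m..<m] moves p m to m, and
  the rest is a canonical word for the remaining permutation of {0..<m}.\<close>
primrec canon_word :: "nat \<Rightarrow> (nat \<Rightarrow> nat) \<Rightarrow> nat list" where
  "canon_word 0 p = []"
| "canon_word (Suc m) p = [p m..<m] @ canon_word m (cyc_inv (p m) m \<circ> p)"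

lemma word_perm_upt: "k \<le> m \<Longrightarrow> word_perm [k..<m] = cyc k m"
proof (induction m)
  case 0 then show ?case by (auto simp: cyc_def fun_eq_iff)
next
  case (Suc m)
  show ?case
  proof (cases "k = Suc m")
    case True then show ?thesis by (auto simp: cyc_def fun_eq_iff)
  next
    case False
    then have "k \<le> m" using Suc by simp
    then show ?thesis using Suc.IH
      by (auto simp: word_perm_append cyc_def fun_eq_iff adjsw_def)
  qed
qed

lemma cyc_cyc_inv: "k \<le> m \<Longrightarrow> cyc k m \<circ> cyc_inv k m = id"
  by (auto simp: cyc_def cyc_inv_def fun_eq_iff)

lemma cyc_inv_cyc: "k \<le> m \<Longrightarrow> cyc_inv k m \<circ> cyc k m = id"
  by (auto simp: cyc_def cyc_inv_def fun_eq_iff)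

lemma cyc_inv_permutes: "k \<le> m \<Longrightarrow> cyc_inv k m permutes {0..<Suc m}"
  apply (rule bij_imp_permutes)
   apply (rule bij_betw_byWitness[where f'="cyc k m"])
  using cyc_cyc_inv[of k m] cyc_inv_cyc[of k m]
  by (auto simp: fun_eq_iff cyc_def cyc_inv_def)

lemma permutes_fix_last:
  assumes "p permutes {0..<Suc m}" "p m = m"
  shows "p permutes {0..<m}"
  using assms unfolding permutes_def
  by (metis atLeastLessThan_iff less_Suc_eq)

lemma canon_word_step_permutes:
  assumes "p permutes {0..<Suc m}"
  shows "cyc_inv (p m) m \<circ> p permutes {0..<m}"
proof -
  have k: "p m \<le> m" using permutes_in_image[OF assms, of m] by simp
  show ?thesis
    by (rule permutes_fix_last)
        (auto intro: permutes_compose assms cyc_inv_permutes k simp: cyc_inv_def)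
qed

lemma word_perm_canon: "p permutes {0..<m} \<Longrightarrow> word_perm (canon_word m p) = p"
proof (induction m arbitrary: p)
  case 0 then show ?case by (simp add: permutes_empty)
next
  case (Suc m)
  have k: "p m \<le> m" using permutes_in_image[OF Suc.prems, of m] by simp
  have "word_perm (canon_word (Suc m) p) = cyc (p m) m \<circ> (cyc_inv (p m) m \<circ> p)"
    using Suc.IH[OF canon_word_step_permutes[OF Suc.prems]] k
    by (simp add: word_perm_append word_perm_upt del: o_apply)
  also have "\<dots> = p" using cyc_cyc_inv[OF k] by (simp add: comp_assoc[symmetric])
  finally show ?case .
qed

lemma canon_word_valid: "\<forall>b\<in>set (canon_word m p). Suc b < m"
proof (induction m arbitrary: p)
  case (Suc m)
  then show ?case by (auto dest: Suc_lessD)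
qed simp

section \<open>Products along words\<close>

text \<open>An abstraction of hatprod: r \<xi> b is the generator at position b for the parameter
  assignment \<xi>, and applying it permutes the parameters by adjsw b. Under unitarity, far
  commutativity and the braid relation, the product along a word depends only on the permutation
  the word represents (a form of Matsumoto's theorem), see wprod_canon_word.\<close>
locale braid_cocycle =
  fixes mul :: "'a \<Rightarrow> 'a \<Rightarrow> 'a" and one :: 'a and r :: "(nat \<Rightarrow> 'p) \<Rightarrow> nat \<Rightarrow> 'a"
    and L :: nat and S :: "'a set"
  assumes assoc: "mul (mul x y) z = mul x (mul y z)"
    and closed: "x \<in> S \<Longrightarrow> y \<in> S \<Longrightarrow> mul x y \<in> S"
    and one_S: "one \<in> S" and r_S: "r \<xi> b \<in> S"
    and lunit: "x \<in> S \<Longrightarrow> mul one x = x"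
    and runit: "x \<in> S \<Longrightarrow> mul x one = x"
    and inverse: "Suc b < L \<Longrightarrow> mul (r (\<xi> \<circ> adjsw b) b) (r \<xi> b) = one"
    and far_comm: "Suc b < g \<Longrightarrow> Suc g < L \<Longrightarrow>
        mul (r (\<xi> \<circ> adjsw b) g) (r \<xi> b) = mul (r (\<xi> \<circ> adjsw g) b) (r \<xi> g)"
    and braid: "Suc (Suc b) < L \<Longrightarrow>
        mul (r (\<xi> \<circ> adjsw b \<circ> adjsw (Suc b)) b) (mul (r (\<xi> \<circ> adjsw b) (Suc b)) (r \<xi> b))
      = mul (r (\<xi> \<circ> adjsw (Suc b) \<circ> adjsw b) (Suc b)) (mul (r (\<xi> \<circ> adjsw (Suc b)) b) (r \<xi> (Suc b)))"
begin

fun wprod :: "(nat \<Rightarrow> 'p) \<Rightarrow> nat list \<Rightarrow> 'a" where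
  "wprod \<xi> [] = one"
| "wprod \<xi> (b # w) = mul (wprod (\<xi> \<circ> adjsw b) w) (r \<xi> b)"

lemma wprod_S: "wprod \<xi> w \<in> S"
  by (induction w arbitrary: \<xi>) (auto intro: closed one_S r_S)

lemma wprod_append: "wprod \<xi> (u @ v) = mul (wprod (\<xi> \<circ> word_perm u) v) (wprod \<xi> u)"
  by (induction u arbitrary: \<xi>) (auto simp: runit wprod_S assoc comp_assoc)

definition word_equiv :: "nat list \<Rightarrow> nat list \<Rightarrow> bool" where
  "word_equiv u v \<longleftrightarrow> word_perm u = word_perm v \<and> (\<forall>\<xi>. wprod \<xi> u = wprod \<xi> v)"

lemma word_equiv_refl [simp]: "word_equiv u u"
  by (simp add: word_equiv_def)

lemma word_equiv_sym: "word_equiv u v \<Longrightarrow> word_equiv v u"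
  by (simp add: word_equiv_def)

lemma word_equiv_trans [trans]: "word_equiv u v \<Longrightarrow> word_equiv v w \<Longrightarrow> word_equiv u w"
  by (simp add: word_equiv_def)

lemma word_equiv_app: "word_equiv u v \<Longrightarrow> word_equiv (p @ u @ q) (p @ v @ q)"
  unfolding word_equiv_def by (auto simp: word_perm_append wprod_append)

lemma word_equiv_appL: "word_equiv u v \<Longrightarrow> word_equiv (p @ u) (p @ v)"
  using word_equiv_app[of u v p "[]"] by simp

lemma word_equiv_appR: "word_equiv u v \<Longrightarrow> word_equiv (u @ q) (v @ q)"
  using word_equiv_app[of u v "[]" q] by simp

lemma word_equiv_Cons: "word_equiv u v \<Longrightarrow> word_equiv (b # u) (b # v)"
  using word_equiv_appL[of u v "[b]"] by simp

lemma word_equiv_inverse: "Suc b < L \<Longrightarrow> word_equiv [b, b] []"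
  unfolding word_equiv_def by (auto simp: lunit r_S inverse)

lemma word_equiv_far_comm:
  assumes "Suc b < L" "Suc g < L" "Suc b < g \<or> Suc g < b"
  shows "word_equiv [b, g] [g, b]"
proof -
  have "word_equiv [b, g] [g, b]" if "Suc b < g" "Suc g < L" for b g
  proof -
    have "word_perm [b, g] = word_perm [g, b]" using adjsw_comm[OF that(1)] by simp
    moreover have "wprod \<xi> [b, g] = wprod \<xi> [g, b]" for \<xi>
      using far_comm[OF that, of \<xi>] by (simp add: lunit r_S)
    ultimately show ?thesis by (simp add: word_equiv_def)
  qed
  then show ?thesis using assms word_equiv_sym by blast
qed

lemma word_equiv_braid: assumes "Suc (Suc b) < L" shows "word_equiv [b, Suc b, b] [Suc b, b, Suc b]"
proof -
  have p: "word_perm [b, Suc b, b] = word_perm [Suc b, b, Suc b]"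
    using adjsw_braid[of b] by (simp add: comp_assoc)
  have "wprod \<xi> [b, Suc b, b] = wprod \<xi> [Suc b, b, Suc b]" for \<xi>
  proof -
    have "wprod \<xi> [b, Suc b, b]
        = mul (mul (r (\<xi> \<circ> adjsw b \<circ> adjsw (Suc b)) b) (r (\<xi> \<circ> adjsw b) (Suc b))) (r \<xi> b)"
      by (simp add: lunit r_S)
    also have "\<dots>
        = mul (r (\<xi> \<circ> adjsw (Suc b) \<circ> adjsw b) (Suc b))
        (mul (r (\<xi> \<circ> adjsw (Suc b)) b) (r \<xi> (Suc b)))"
      unfolding assoc by (rule braid[OF assms])
    also have "\<dots> = wprod \<xi> [Suc b, b, Suc b]"
      by (simp add: lunit r_S assoc)
    finally show ?thesis .
  qed
  then show ?thesis using p by (simp add: word_equiv_def)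
qed

lemma word_equiv_move_past:
  assumes "\<forall>g\<in>set w. (Suc b < g \<or> Suc g < b) \<and> Suc g < L" "Suc b < L"
  shows "word_equiv (w @ [b]) (b # w)"
  using assms
proof (induction w)
  case Nil then show ?case by simp
next
  case (Cons g w)
  have "word_equiv ((g # w) @ [b]) (g # b # w)"
    using Cons by (simp add: word_equiv_Cons)
  also have "word_equiv (g # b # w) (b # g # w)"
    using word_equiv_appR[OF word_equiv_far_comm[of g b], of w] Cons.prems by auto
  finally show ?case .
qed

lemma upt_split_pair: "k \<le> j \<Longrightarrow> Suc (Suc j) \<le> m \<Longrightarrow> [k..<m] = [k..<j] @ [j, Suc j] @ [Suc (Suc j)..<m]"
proof -
  assume a: "k \<le> j" "Suc (Suc j) \<le> m"
  have "[k..<m] = [k..<j] @ [j..<m]" using a upt_add_eq_append[of k j "m - j"] by simp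
  also have "[j..<m] = j # Suc j # [Suc (Suc j)..<m]" using a
    by (simp add: upt_conv_Cons)
  finally show ?thesis by simp
qed

lemma word_equiv_upt_shift:
  assumes "k \<le> j" "Suc (Suc j) \<le> m" "m < L"
  shows "word_equiv ([k..<m] @ [j]) (Suc j # [k..<m])"
proof -
  have "word_equiv ([k..<m] @ [j]) ([k..<j] @ [j, Suc j] @ ([Suc (Suc j)..<m] @ [j]))"
    using upt_split_pair[OF assms(1,2)] by simp
  also have "word_equiv \<dots> ([k..<j] @ [j, Suc j] @ (j # [Suc (Suc j)..<m]))"
    using assms by (intro word_equiv_appL word_equiv_move_past) auto
  also have "([k..<j] @ [j, Suc j] @ (j # [Suc (Suc j)..<m]))
      = [k..<j] @ [j, Suc j, j] @ [Suc (Suc j)..<m]"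
    by simp
  also have "word_equiv \<dots> ([k..<j] @ [Suc j, j, Suc j] @ [Suc (Suc j)..<m])"
    using assms by (intro word_equiv_app word_equiv_braid) auto
  also have "([k..<j] @ [Suc j, j, Suc j] @ [Suc (Suc j)..<m])
      = ([k..<j] @ [Suc j]) @ [j, Suc j] @ [Suc (Suc j)..<m]"
    by simp
  also have "word_equiv \<dots> ((Suc j # [k..<j]) @ [j, Suc j] @ [Suc (Suc j)..<m])"
    using assms by (intro word_equiv_appR word_equiv_move_past) auto
  also have "((Suc j # [k..<j]) @ [j, Suc j] @ [Suc (Suc j)..<m]) = Suc j # [k..<m]"
    using upt_split_pair[OF assms(1,2)] by simp
  finally show ?thesis .
qed

lemma cyc_inv_adjsw1: "Suc b \<le> m \<Longrightarrow> cyc_inv (Suc b) m \<circ> adjsw b = cyc_inv b m"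
  by (auto simp: fun_eq_iff cyc_inv_def adjsw_def)

lemma cyc_inv_adjsw2: "Suc b \<le> m \<Longrightarrow> cyc_inv b m \<circ> adjsw b = cyc_inv (Suc b) m"
  by (auto simp: fun_eq_iff cyc_inv_def adjsw_def)

lemma cyc_inv_adjsw3: "Suc b < k \<Longrightarrow> k \<le> m \<Longrightarrow> cyc_inv k m \<circ> adjsw b = adjsw b \<circ> cyc_inv k m"
  by (auto simp: fun_eq_iff cyc_inv_def adjsw_def)

lemma cyc_inv_adjsw4: "k < b \<Longrightarrow> b < m \<Longrightarrow> cyc_inv k m \<circ> adjsw b = adjsw (b - 1) \<circ> cyc_inv k m"
  by (auto simp: fun_eq_iff cyc_inv_def adjsw_def)

lemma canon_word_id: "canon_word m id = []"
proof (induction m)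
  case (Suc m)
  have "cyc_inv m m = id" by (auto simp: fun_eq_iff cyc_inv_def)
  then show ?case using Suc by simp
qed simp

lemma canon_word_adjsw: "m \<le> L \<Longrightarrow> p permutes {0..<m} \<Longrightarrow> Suc b < m \<Longrightarrow>
   word_equiv (canon_word m (adjsw b \<circ> p)) (b # canon_word m p)"
proof (induction m arbitrary: p b)
  case 0 then show ?case by simp
next
  case (Suc m)
  define k where "k = p m"
  have k: "k \<le> m" using permutes_in_image[OF Suc.prems(2), of m] by (simp add: k_def)
  define p' where "p' = cyc_inv k m \<circ> p"
  have p': "p' permutes {0..<m}" unfolding p'_def k_def
      by (rule canon_word_step_permutes[OF Suc.prems(2)])
  have bm: "b < m" using Suc.prems by simp
  have cp: "canon_word (Suc m) p = [k..<m] @ canon_word m p'" by (simp add: k_def p'_def)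
  have ca: "canon_word (Suc m) (adjsw b \<circ> p)
      = [adjsw b k..<m] @ canon_word m (cyc_inv (adjsw b k) m \<circ> adjsw b \<circ> p)"
    by (simp add: k_def comp_assoc)
  consider "k = b" | "k = Suc b" | "Suc b < k" | "k < b" by linarith
  then show ?case
  proof cases
    case 1
    have e1: "canon_word (Suc m) (adjsw b \<circ> p) = [Suc b..<m] @ canon_word m p'"
      using ca 1 cyc_inv_adjsw1[of b m] bm by (simp add: adjsw_def p'_def)
    have e2: "[b, b] @ [Suc b..<m] @ canon_word m p' = b # canon_word (Suc m) p"
      using cp 1 bm by (simp add: upt_conv_Cons)
    have w: "word_equiv ([Suc b..<m] @ canon_word m p') ([b, b] @ [Suc b..<m] @ canon_word m p')"
      using word_equiv_appR[OF word_equiv_inverse[of b], of "[Suc b..<m] @ canon_word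
          m p'"] Suc.prems
      by (auto intro: word_equiv_sym)
    show ?thesis unfolding e1 e2[symmetric] by (rule w)
  next
    case 2
    have "canon_word (Suc m) (adjsw b \<circ> p) = [b..<m] @ canon_word m p'"
      using ca 2 cyc_inv_adjsw2[of b m] k by (simp add: adjsw_def p'_def)
    also have "\<dots> = b # canon_word (Suc m) p"
      using cp 2 bm by (simp add: upt_conv_Cons)
    finally show ?thesis by (simp only: word_equiv_refl)
  next
    case 3
    have "canon_word (Suc m) (adjsw b \<circ> p) = [k..<m] @ canon_word m (adjsw b \<circ> p')"
      using ca 3 cyc_inv_adjsw3[of b k m] k by (simp add: adjsw_def p'_def comp_assoc)
    also have "word_equiv \<dots> ([k..<m] @ (b # canon_word m p'))"
      using Suc.prems 3 k by (intro word_equiv_appL Suc.IH p') auto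
    also have "[k..<m] @ (b # canon_word m p') = ([k..<m] @ [b]) @ canon_word m p'" by simp
    also have "word_equiv \<dots> ((b # [k..<m]) @ canon_word m p')"
      using Suc.prems 3 by (intro word_equiv_appR word_equiv_move_past) auto
    also have "(b # [k..<m]) @ canon_word m p' = b # canon_word (Suc m) p" using cp by simp
    finally show ?thesis .
  next
    case 4
    have "canon_word (Suc m) (adjsw b \<circ> p) = [k..<m] @ canon_word m (adjsw (b - 1) \<circ> p')"
      using ca 4 cyc_inv_adjsw4[of k b m] bm by (simp add: adjsw_def p'_def comp_assoc)
    also have "word_equiv \<dots> ([k..<m] @ ((b - 1) # canon_word m p'))"
      using Suc.prems 4 k by (intro word_equiv_appL Suc.IH p') auto
    also have "[k..<m] @ ((b - 1) # canon_word m p')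
        = ([k..<m] @ [b - 1]) @ canon_word m p'" by simp
    also have "word_equiv \<dots> ((Suc (b - 1) # [k..<m]) @ canon_word m p')"
      using Suc.prems 4 by (intro word_equiv_appR word_equiv_upt_shift) auto
    also have "(Suc (b - 1) # [k..<m]) @ canon_word m p' = b # canon_word (Suc m) p"
        using cp 4 by simp
    finally show ?thesis .
  qed
qed

lemma wprod_canon_word: "\<forall>b\<in>set w. Suc b < L \<Longrightarrow> wprod \<xi> w = wprod \<xi> (canon_word L (word_perm w))"
proof (induction w arbitrary: \<xi>)
  case Nil then show ?case using canon_word_id[of L] by (simp add: id_def)
next
  case (Cons b w)
  have "wprod \<xi> (b # w) = wprod \<xi> (b # canon_word L (word_perm w))"
    using Cons by simp
  also have "\<dots> = wprod \<xi> (canon_word L (adjsw b \<circ> word_perm w))"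
    using canon_word_adjsw[of L "word_perm w" b] word_perm_permutes[of w L] Cons.prems
        unfolding word_equiv_def by auto
  finally show ?case by (simp add: comp_def)
qed

end

section \<open>The starred sum\<close>

text \<open>starcond L t y holds iff i \<mapsto> key y (t i) is strictly increasing on {0..<L}, i.e. t is
  the stable sorting permutation of the colour tuple y. Hence for each y exactly one summand of
  Fcal survives.\<close>
definition key :: "nat list \<Rightarrow> nat \<Rightarrow> nat \<times> nat" where
  "key y i = (y ! i, i)"

lemma starcond_step: "starcond L t y \<Longrightarrow> Suc i < L \<Longrightarrow> key y (t i) < key y (t (Suc i))"
  unfolding starcond_def key_def
  by (erule allE[of _ i]) (auto split: if_splits simp: le_less)

lemma starcond_chain: "starcond L t y \<Longrightarrow> i < j \<Longrightarrow> j < L \<Longrightarrow> key y (t i) < key y (t j)"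
proof (induction j)
  case 0 then show ?case by simp
next
  case (Suc j)
  have s: "key y (t j) < key y (t (Suc j))" using starcond_step[OF Suc.prems(1)] Suc.prems by simp
  show ?case
  proof (cases "i = j")
    case True then show ?thesis using s by simp
  next
    case False
    then have "key y (t i) < key y (t j)" using Suc by simp
    then show ?thesis using s by (rule less_trans)
  qed
qed

lemma key_less: "key y a < key y b \<longleftrightarrow> y ! a < y ! b \<or> (y ! a = y ! b \<and> a < b)"
  unfolding key_def by (auto simp: le_less)

lemma starcondI:
  assumes "\<And>i. Suc i < L \<Longrightarrow> key y (t i) < key y (t (Suc i))"
  shows "starcond L t y"
  unfolding starcond_def
proof (intro allI impI)
  fix i assume "Suc i < L"
  then have "key y (t i) < key y (t (Suc i))" by (rule assms)
  then show "if t i < t (Suc i) then y ! t i \<le> y ! t (Suc i) else y ! t i < y ! t (Suc i)"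
    unfolding key_less by auto
qed

lemma starcond_sorted:
  assumes "starcond L t y" "t permutes {0..<L}" "length y = L"
  shows "sorted (permute_list t y)"
proof -
  have "\<forall>i<L. t i < L" using permutes_in_image[OF assms(2)] by auto
  then show ?thesis
    unfolding sorted_iff_nth_mono_less permute_list_def using assms(3)
    using starcond_chain[OF assms(1)] by (fastforce simp: key_less)
qed

lemma starcond_sort:
  assumes "starcond L t y" "t permutes {0..<L}" "length y = L"
  shows "permute_list t y = sort y"
proof -
  have "t permutes {..<length y}" using assms(2,3) by (simp add: lessThan_atLeast0)
  then show ?thesis
    by (intro properties_for_sort[symmetric]) (simp_all add: starcond_sorted[OF assms])
qed

lemma sort_permute_list: "\<sigma> permutes {..<length xs} \<Longrightarrow> sort (permute_list \<sigma> xs) = sort xs"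
  by (metis mset_permute_list sorted_list_of_multiset_mset)

lemma starcond_unique:
  assumes "t permutes {0..<L}" "t' permutes {0..<L}" "starcond L t y" "starcond L t' y"
  shows "t = t'"
proof -
  define xs where "xs = map (key y \<circ> t) [0..<L]"
  define ys where "ys = map (key y \<circ> t') [0..<L]"
  have sx: "sorted_wrt (<) xs" unfolding xs_def sorted_wrt_iff_nth_less
    using starcond_chain[OF assms(3)] by auto
  have sy: "sorted_wrt (<) ys" unfolding ys_def sorted_wrt_iff_nth_less
    using starcond_chain[OF assms(4)] by auto
  have "set xs = key y ` t ` {0..<L}" unfolding xs_def by (auto simp: image_comp)
  also have "t ` {0..<L} = {0..<L}" using assms(1) by (rule permutes_image)
  also have "{0..<L} = t' ` {0..<L}" using assms(2) by (rule permutes_image[symmetric])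
  also have "key y ` t' ` {0..<L} = set ys" unfolding ys_def by (auto simp: image_comp)
  finally have "set xs = set ys" .
  then have "xs = ys" using sx sy by (simp add: strict_sorted_iff sorted_distinct_set_unique)
  have "\<forall>i<L. key y (t i) = key y (t' i)"
  proof (intro allI impI)
    fix i assume "i < L"
    then have "xs ! i = ys ! i" using \<open>xs = ys\<close> by simp
    then show "key y (t i) = key y (t' i)" using \<open>i < L\<close> by (simp add: xs_def ys_def)
  qed
  then have "\<forall>i<L. t i = t' i" by (simp add: key_def)
  moreover have "\<forall>i. i \<ge> L \<longrightarrow> t i = i \<and> t' i = i"
    using assms(1,2) by (auto simp: permutes_def)
  ultimately show ?thesis by (metis ext not_le)
qed

lemma starcond_exists:
  assumes "length y = L"
  shows "\<exists>t. t permutes {0..<L} \<and> starcond L t y"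
proof -
  define ks where "ks = sort_key (key y) [0..<L]"
  have lk: "length ks = L" and dk: "distinct ks" and sk: "set ks = {0..<L}"
    and so: "sorted (map (key y) ks)" by (auto simp: ks_def)
  define t where "t i = (if i < L then ks ! i else i)" for i
  have bij: "bij_betw ((!) ks) {..<L} {0..<L}"
    using bij_betw_nth[OF dk] lk sk by simp
  have "bij_betw t {..<L} {0..<L}"
    using bij by (subst bij_betw_cong[where g = "(!) ks"]) (auto simp: t_def)
  then have "bij_betw t {0..<L} {0..<L}" by (simp add: lessThan_atLeast0)
  then have tp: "t permutes {0..<L}"
    by (rule bij_imp_permutes) (auto simp: t_def)
  have "starcond L t y"
  proof (rule starcondI)
    fix i assume i: "Suc i < L"
    have "(map (key y) ks) ! i \<le> (map (key y) ks) ! Suc i"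
      using so i lk unfolding sorted_iff_nth_mono_less by simp
    then have "key y (ks ! i) \<le> key y (ks ! Suc i)" using i lk by simp
    moreover have "ks ! i \<noteq> ks ! Suc i" using dk i lk by (simp add: nth_eq_iff_index_eq)
    then have "key y (ks ! i) \<noteq> key y (ks ! Suc i)" by (simp add: key_def)
    ultimately show "key y (t i) < key y (t (Suc i))" using i by (simp add: t_def)
  qed
  then show ?thesis using tp by blast
qed

section \<open>Site permutations\<close>

abbreviation swap_sites :: "nat \<Rightarrow> nat \<Rightarrow> nat list \<Rightarrow> nat list" where
  "swap_sites j k \<equiv> permute_list (transpose j k)"

lemma swap_sites_nth: "i < length xs \<Longrightarrow> swap_sites j k xs ! i = xs ! transpose j k i"
  by (simp add: permute_list_def)

lemma transpose_less: "j < L \<Longrightarrow> k < L \<Longrightarrow> i < L \<Longrightarrow> transpose j k i < L"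
  by (simp add: transpose_def)

lemma swap_sites_tuples: "xs \<in> tuples N L \<Longrightarrow> j < L \<Longrightarrow> k < L \<Longrightarrow> swap_sites j k xs \<in> tuples N L"
  by (rule tuplesI) (auto simp: swap_sites_nth tuplesD transpose_less)

lemma swap_sites_swap_sites: "j < length xs \<Longrightarrow> k < length xs
    \<Longrightarrow> swap_sites j k (swap_sites j k xs) = xs"
  by (rule nth_equalityI) (auto simp: swap_sites_nth transpose_less)

lemma Pswap_entry:
  assumes "j < L" "k < L" "j \<noteq> k" "length xs = L" "length zs = L"
  shows "Pswap L j k xs zs = (if zs = swap_sites j k xs then 1 else 0)"
proof -
  have l: "length xs = L" "length zs = L" using assms by auto
  have "(\<forall>m<L. m \<noteq> j \<longrightarrow> m \<noteq> k \<longrightarrow> xs ! m = zs ! m) \<and> zs ! j = xs ! k \<and> zs ! k = xs ! j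
        \<longleftrightarrow> zs = swap_sites j k xs" (is "?a \<longleftrightarrow> ?b")
  proof
    assume ?a then show ?b using l assms by (intro nth_equalityI)
        (auto simp: swap_sites_nth transpose_def)
  next
    assume ?b then show ?a using l assms by (auto simp: swap_sites_nth transpose_def)
  qed
  then show ?thesis unfolding Pswap_def emb_def by auto
qed

lemma mmul_Pswap_left:
  assumes "j < L" "k < L" "j \<noteq> k" "xs \<in> tuples N L"
  shows "mmul N L (Pswap L j k) A xs ys = A (swap_sites j k xs) ys"
proof -
  have P: "\<And>zs. zs \<in> tuples N L \<Longrightarrow> Pswap L j k xs zs = (if zs = swap_sites j k xs then 1 else 0)"
    using assms by (auto simp: Pswap_entry tuplesD)
  show ?thesis unfolding mmul_def
    by (subst sum_eq_single[where z="swap_sites j k xs"]) (simp_all add: P assms swap_sites_tuples)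
qed

lemma mmul_Pswap_right:
  assumes "j < L" "k < L" "j \<noteq> k" "ys \<in> tuples N L"
  shows "mmul N L A (Pswap L j k) xs ys = A xs (swap_sites j k ys)"
proof -
  have "\<And>zs. zs \<in> tuples N L \<Longrightarrow> Pswap L j k zs ys = (if zs = swap_sites j k ys then 1 else 0)"
    using assms by (auto simp: Pswap_entry swap_sites_swap_sites tuplesD)
  then show ?thesis unfolding mmul_def
    by (subst sum_eq_single[where z="swap_sites j k ys"]) (auto simp: assms swap_sites_tuples)
qed

lemma emb_swap_sites:
  assumes "length xs = L" "length ys = L" "j < L" "k < L" "p < L" "q < L"
  shows "emb L p q M (swap_sites j k xs) (swap_sites j k ys)
      = emb L (transpose j k p) (transpose j k q) M xs ys"
proof -
  have "(\<forall>m<L. m \<noteq> p \<longrightarrow> m \<noteq> q \<longrightarrow> swap_sites j k xs ! m = swap_sites j k ys ! m) \<longleftrightarrow>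
        (\<forall>m<L. m \<noteq> transpose j k p \<longrightarrow> m \<noteq> transpose j k q \<longrightarrow> xs ! m = ys ! m)" (is "?a \<longleftrightarrow> ?b")
  proof
    assume a: ?a
    show ?b
    proof (intro allI impI)
      fix m assume m: "m < L" "m \<noteq> transpose j k p" "m \<noteq> transpose j k q"
      have "transpose j k m < L" using m assms by (simp add: transpose_less)
      moreover have "transpose j k m \<noteq> p" "transpose j k m \<noteq> q" using m
          by (metis transpose_involutory)+
      ultimately have "swap_sites j k xs ! transpose j k m = swap_sites j k ys ! transpose j k m"
          using a by blast
      then show "xs ! m = ys ! m" using assms \<open>transpose j k m < L\<close> by (simp add: swap_sites_nth)
    qed
  next
    assume b: ?b
    show ?a
    proof (intro allI impI)
      fix m assume m: "m < L" "m \<noteq> p" "m \<noteq> q"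
      have "transpose j k m \<noteq> transpose j k p" "transpose j k m \<noteq> transpose j k q" using m
          by (metis transpose_involutory)+
      then have "xs ! transpose j k m = ys ! transpose j k m" using b m assms
          by (simp add: transpose_less)
      then show "swap_sites j k xs ! m = swap_sites j k ys ! m" using m assms
          by (simp add: swap_sites_nth)
    qed
  qed
  then show ?thesis unfolding emb_def using assms by (auto simp: swap_sites_nth)
qed

definition rPswap :: "nat \<Rightarrow> nat \<Rightarrow> nat \<Rightarrow> nat \<Rightarrow> op" where
  "rPswap N L j k = restr N L (Pswap L j k)"

lemma restricted_rPswap [simp]: "restricted N L (rPswap N L j k)"
  by (simp add: rPswap_def)

lemma rPswap_rPswap: "j < L \<Longrightarrow> k < L \<Longrightarrow> j \<noteq> k \<Longrightarrow> mmul N L (rPswap N L j k) (rPswap N L j k)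
    = restr N L idop"
  unfolding rPswap_def restr_mmul[symmetric]
  by (auto simp: fun_eq_iff restr_def mmul_Pswap_left Pswap_entry swap_sites_tuples
      swap_sites_swap_sites tuplesD idop_def)

lemma rPswap_conj_emb:
  assumes "j < L" "k < L" "j \<noteq> k" "p < L" "q < L"
  shows "mmul N L (rPswap N L j k) (mmul N L (restr N L (emb L p q M)) (rPswap N L j k))
      = restr N L (emb L (transpose j k p) (transpose j k q) M)"
  unfolding rPswap_def restr_mmul[symmetric]
  by (auto simp: fun_eq_iff restr_def mmul_Pswap_left mmul_Pswap_right swap_sites_tuples assms
      emb_swap_sites tuplesD)

lemma rPswap_braid:
  assumes "Suc (Suc b) < L"
  shows "mmul N L (rPswap N L b (Suc b))
      (mmul N L (rPswap N L (Suc b) (Suc (Suc b))) (rPswap N L b (Suc b)))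
       = mmul N L (rPswap N L (Suc b) (Suc (Suc b)))
           (mmul N L (rPswap N L b (Suc b)) (rPswap N L (Suc b) (Suc (Suc b))))"
proof -
  have e: "swap_sites b (Suc b) (swap_sites (Suc b) (Suc (Suc b)) (swap_sites b (Suc b) xs)) =
           swap_sites (Suc b) (Suc (Suc b))
               (swap_sites b (Suc b) (swap_sites (Suc b) (Suc (Suc b)) xs))"
    if "length xs = L" for xs
    using that assms by (intro nth_equalityI) (auto simp: swap_sites_nth transpose_def)
  have l: "b < L" "Suc b < L" "Suc (Suc b) < L" using assms by auto
  have "mmul N L (Pswap L b (Suc b))
      (mmul N L (Pswap L (Suc b) (Suc (Suc b))) (Pswap L b (Suc b))) xs ys
      = mmul N L (Pswap L (Suc b) (Suc (Suc b)))
          (mmul N L (Pswap L b (Suc b)) (Pswap L (Suc b) (Suc (Suc b)))) xs ys"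
    if "xs \<in> tuples N L" "ys \<in> tuples N L" for xs ys
  proof -
    have lx: "length xs = L" "length ys = L" using that by (auto simp: tuplesD)
    have s1: "swap_sites b (Suc b) xs \<in> tuples N L"
        "swap_sites (Suc b) (Suc (Suc b)) xs \<in> tuples N L"
      using that l by (auto intro: swap_sites_tuples)
    have s2: "swap_sites (Suc b) (Suc (Suc b)) (swap_sites b (Suc b) xs) \<in> tuples N L"
         "swap_sites b (Suc b) (swap_sites (Suc b) (Suc (Suc b)) xs) \<in> tuples N L"
      using s1 l by (auto intro: swap_sites_tuples)
    show ?thesis
      using l lx s1 s2 that by (simp add: mmul_Pswap_left Pswap_entry e tuplesD)
  qed
  then show ?thesis unfolding rPswap_def restr_mmul[symmetric] by (auto simp: fun_eq_iff restr_def)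
qed

lemma Pmat_entry:
  assumes "length xs = L" "length zs = L"
  shows "Pmat L s xs zs = (if zs = permute_list s xs then 1 else 0)"
proof -
  have "(\<forall>i<L. xs ! s i = zs ! i) \<longleftrightarrow> zs = permute_list s xs"
    using assms by (auto simp: permute_list_def intro!: nth_equalityI)
  then show ?thesis by (simp add: Pmat_def)
qed

lemma permute_list_tuples: "xs \<in> tuples N L \<Longrightarrow> s permutes {0..<L} \<Longrightarrow> permute_list s xs \<in> tuples N L"
proof (rule tuplesI)
  fix i assume a: "xs \<in> tuples N L" "s permutes {0..<L}" "i < L"
  then have "s i < L" using permutes_in_image[OF a(2), of i] by simp
  then show "permute_list s xs ! i < N" using a by (simp add: permute_list_def tuplesD)
qed (simp add: tuplesD)

lemma mmul_Pmat_left: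
  assumes "xs \<in> tuples N L" "s permutes {0..<L}"
  shows "mmul N L (Pmat L s) A xs ys = A (permute_list s xs) ys"
proof -
  have P: "\<And>zs. zs \<in> tuples N L \<Longrightarrow> Pmat L s xs zs = (if zs = permute_list s xs then 1 else 0)"
    using assms by (auto simp: Pmat_entry tuplesD)
  show ?thesis unfolding mmul_def
    by (subst sum_eq_single[where z="permute_list s xs"])
        (simp_all add: P assms permute_list_tuples)
qed

lemma permute_list_inv:
  assumes "s permutes {0..<L}" "length zs = L"
  shows "permute_list s (permute_list (inv s) zs) = zs"
proof -
  have "s permutes {..<length zs}" using assms by (simp add: lessThan_atLeast0)
  then have "permute_list (inv s \<circ> s) zs = permute_list s (permute_list (inv s) zs)"
    by (rule permute_list_compose)
  moreover have "inv s \<circ> s = id" using assms(1) by (rule permutes_inv_o)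
  ultimately show ?thesis by simp
qed

lemma permute_list_permute_list:
  assumes "s permutes {0..<L}" "t permutes {0..<L}" "length xs = L"
  shows "permute_list t (permute_list s xs) = permute_list (s \<circ> t) xs"
proof -
  have "t permutes {..<length xs}" using assms by (simp add: lessThan_atLeast0)
  then show ?thesis by (simp add: permute_list_compose)
qed

section \<open>Operators on windows of consecutive sites\<close>

text \<open>Multiplicativity of emb_window (restr_emb_window_mmul) transports unitarity and the
  Yang-Baxter equation from 2 and 3 sites to the chain.\<close>
definition window :: "nat \<Rightarrow> nat \<Rightarrow> nat list \<Rightarrow> nat list" where
  "window p w xs = map (\<lambda>i. xs ! (p + i)) [0..<w]"

definition window_update :: "nat \<Rightarrow> nat \<Rightarrow> nat list \<Rightarrow> nat list \<Rightarrow> nat list" where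
  "window_update p w xs t
      = map (\<lambda>m. if p \<le> m \<and> m < p + w then t ! (m - p) else xs ! m) [0..<length xs]"

definition agree_outside :: "nat \<Rightarrow> nat \<Rightarrow> nat \<Rightarrow> nat list \<Rightarrow> nat list \<Rightarrow> bool" where
  "agree_outside L p w xs ys \<longleftrightarrow> (\<forall>m<L. (m < p \<or> p + w \<le> m) \<longrightarrow> xs ! m = ys ! m)"

definition emb_window :: "nat \<Rightarrow> nat \<Rightarrow> nat \<Rightarrow> op \<Rightarrow> op" where
  "emb_window L p w M xs ys
      = (if agree_outside L p w xs ys then M (window p w xs) (window p w ys) else 0)"

lemma window_tuples: "xs \<in> tuples N L \<Longrightarrow> p + w \<le> L \<Longrightarrow> window p w xs \<in> tuples N w"
  by (rule tuplesI) (auto simp: window_def tuplesD)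

lemma window_update_tuples: "xs \<in> tuples N L \<Longrightarrow> t \<in> tuples N w \<Longrightarrow> p + w \<le> L
    \<Longrightarrow> window_update p w xs t \<in> tuples N L"
  by (rule tuplesI) (auto simp: window_update_def tuplesD)

lemma window_window_update: "length t = w \<Longrightarrow> p + w \<le> length xs
    \<Longrightarrow> window p w (window_update p w xs t) = t"
  by (rule nth_equalityI) (auto simp: window_def window_update_def)

lemma window_update_window: "agree_outside L p w xs zs \<Longrightarrow> length xs = L \<Longrightarrow> length zs = L \<Longrightarrow> p + w \<le> L \<Longrightarrow>
   window_update p w xs (window p w zs) = zs"
  by (rule nth_equalityI) (auto simp: window_def window_update_def agree_outside_def)

lemma agree_outside_window_update: "length xs = L \<Longrightarrow> agree_outside L p w xs (window_update p w xs t)"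
  by (auto simp: agree_outside_def window_update_def)

lemma agree_outside_sym: "agree_outside L p w xs ys \<Longrightarrow> agree_outside L p w ys xs"
  by (auto simp: agree_outside_def)

lemma agree_outside_trans: "agree_outside L p w xs ys \<Longrightarrow> agree_outside L p w ys zs
    \<Longrightarrow> agree_outside L p w xs zs"
  by (auto simp: agree_outside_def)

lemma emb_window_mmul:
  assumes xs: "xs \<in> tuples N L" and ys: "ys \<in> tuples N L" and pw: "p + w \<le> L"
  shows "mmul N L (emb_window L p w A) (emb_window L p w B) xs ys
      = emb_window L p w (mmul N w A B) xs ys"
proof -
  define f where "f zs = emb_window L p w A xs zs * emb_window L p w B zs ys" for zs
  define S where "S = {zs \<in> tuples N L. agree_outside L p w xs zs}"
  have lx: "length xs = L" "length ys = L" using xs ys by (auto simp: tuplesD)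
  have "mmul N L (emb_window L p w A) (emb_window L p w B) xs ys = sum f (tuples N L)"
    by (simp add: mmul_def f_def)
  also have "\<dots> = sum f S"
    by (rule sum.mono_neutral_right) (auto simp: S_def f_def emb_window_def)
  also have "\<dots> = sum (\<lambda>t. f (window_update p w xs t)) (tuples N w)"
  proof (rule sum.reindex_bij_witness[where j = "window p w" and i = "window_update p w xs"])
    fix a assume "a \<in> S"
    then show "window_update p w xs (window p w a) = a" "window p w a \<in> tuples N w"
        "f (window_update p w xs (window p w a)) = f a"
      using lx pw by (auto simp: S_def window_update_window window_tuples tuplesD)
  next
    fix b assume b: "b \<in> tuples N w"
    then show "window p w (window_update p w xs b) = b" using lx pw
        by (auto simp: window_window_update tuplesD)
    show "window_update p w xs b \<in> S" using b xs pw lx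
        by (auto simp: S_def window_update_tuples agree_outside_window_update)
  qed
  also have "\<dots>
      = (if agree_outside L p w xs ys
      then \<Sum>t\<in>tuples N w. A (window p w xs) t * B t (window p w ys) else 0)"
  proof (cases "agree_outside L p w xs ys")
    case True
    have "f (window_update p w xs t) = A (window p w xs) t * B t (window p w ys)"
        if "t \<in> tuples N w" for t
    proof -
      have "agree_outside L p w (window_update p w xs t) ys"
        using agree_outside_window_update[OF lx(1)] True
        by (blast intro: agree_outside_trans agree_outside_sym)
      then show ?thesis using that agree_outside_window_update[OF lx(1)] lx pw
        by (simp add: f_def emb_window_def window_window_update tuplesD)
    qed
    then show ?thesis using True by simp
  next
    case False
    have "f (window_update p w xs t) = 0" for t
    proof -
      have "\<not> agree_outside L p w (window_update p w xs t) ys"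
        using agree_outside_window_update[OF lx(1)] False by (blast intro: agree_outside_trans)
      then show ?thesis by (simp add: f_def emb_window_def)
    qed
    then show ?thesis using False by simp
  qed
  also have "\<dots> = emb_window L p w (mmul N w A B) xs ys"
    by (simp add: emb_window_def mmul_def)
  finally show ?thesis .
qed

lemma restr_emb_window_mmul: "p + w \<le> L \<Longrightarrow>
  mmul N L (restr N L (emb_window L p w A)) (restr N L (emb_window L p w B))
      = restr N L (emb_window L p w (mmul N w A B))"
  unfolding restr_mmul[symmetric] by (auto simp: fun_eq_iff restr_def emb_window_mmul)

lemma restr_emb_window_cong: "p + w \<le> L \<Longrightarrow> opeq N w A B \<Longrightarrow> restr N L (emb_window L p w A)
    = restr N L (emb_window L p w B)"
  by (auto simp: fun_eq_iff restr_def emb_window_def opeq_def window_tuples)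

lemma restr_emb_window_idop: "p + w \<le> L \<Longrightarrow> restr N L (emb_window L p w idop) = restr N L idop"
proof -
  assume pw: "p + w \<le> L"
  have "emb_window L p w idop xs ys = idop xs ys" if "xs \<in> tuples N L" "ys \<in> tuples N L" for xs ys
  proof -
    have l: "length xs = L" "length ys = L" using that by (auto simp: tuplesD)
    have "(agree_outside L p w xs ys \<and> window p w xs = window p w ys) \<longleftrightarrow> xs = ys"
    proof
      assume a: "agree_outside L p w xs ys \<and> window p w xs = window p w ys"
      show "xs = ys"
      proof (rule nth_equalityI)
        show "length xs = length ys" using l by simp
        fix m assume m: "m < length xs"
        show "xs ! m = ys ! m"
        proof (cases "m < p \<or> p + w \<le> m")
          case True then show ?thesis using a m l by (auto simp: agree_outside_def)
        next
          case False
          then have "window p w xs ! (m - p) = window p w ys ! (m - p)" using a by simp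
          moreover have "m - p < w" "p + (m - p) = m" using False by auto
          ultimately show ?thesis by (simp add: window_def)
        qed
      qed
    qed (auto simp: agree_outside_def)
    then show ?thesis unfolding emb_window_def idop_def by auto
  qed
  then show ?thesis by (auto simp: fun_eq_iff restr_def)
qed

lemma emb_eq_emb_window:
  assumes "xs \<in> tuples N L" "ys \<in> tuples N L" "p \<le> j" "j < p + w" "p \<le> k" "k < p + w" "p + w \<le> L"
  shows "emb L j k M xs ys = emb_window L p w (emb w (j - p) (k - p) M) xs ys"
proof -
  have l: "length xs = L" "length ys = L" using assms by (auto simp: tuplesD)
  have "(\<forall>m<L. m \<noteq> j \<longrightarrow> m \<noteq> k \<longrightarrow> xs ! m = ys ! m) \<longleftrightarrow>
        agree_outside L p w xs ys
            \<and> (\<forall>m<w. m \<noteq> j - p \<longrightarrow> m \<noteq> k - p \<longrightarrow> window p w xs ! m = window p w ys ! m)"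
    (is "?a \<longleftrightarrow> ?b")
  proof
    assume ?a then show ?b using assms unfolding agree_outside_def window_def
      by (auto simp: add.commute)
  next
    assume b: ?b
    show ?a
    proof (intro allI impI)
      fix m assume m: "m < L" "m \<noteq> j" "m \<noteq> k"
      show "xs ! m = ys ! m"
      proof (cases "m < p \<or> p + w \<le> m")
        case True then show ?thesis using b m by (auto simp: agree_outside_def)
      next
        case False
        then have "window p w xs ! (m - p) = window p w ys ! (m - p)" using b m assms by auto
        moreover have "m - p < w" "p + (m - p) = m" using False by auto
        ultimately show ?thesis by (simp add: window_def)
      qed
    qed
  qed
  then show ?thesis using assms unfolding emb_def emb_window_def by (auto simp: window_def)
qed

lemma restr_emb_eq_emb_window:
  "p \<le> j \<Longrightarrow> j < p + w \<Longrightarrow> p \<le> k \<Longrightarrow> k < p + w \<Longrightarrow> p + w \<le> L \<Longrightarrow>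
   restr N L (emb L j k M) = restr N L (emb_window L p w (emb w (j - p) (k - p) M))"
  by (auto simp: fun_eq_iff restr_def emb_eq_emb_window)

lemma mmul_emb_disjoint:
  assumes xs: "xs \<in> tuples N L" and ys: "ys \<in> tuples N L"
    and jk: "j < L" "k < L" "p < L" "q < L" "j \<noteq> p" "j \<noteq> q" "k \<noteq> p" "k \<noteq> q"
  shows "mmul N L (emb L j k A) (emb L p q B) xs ys =
    (if (\<forall>m<L. m \<noteq> j \<longrightarrow> m \<noteq> k \<longrightarrow> m \<noteq> p \<longrightarrow> m \<noteq> q \<longrightarrow> xs ! m = ys ! m)
     then A (xs ! j) (xs ! k) (ys ! j) (ys ! k) * B (xs ! p) (xs ! q) (ys ! p) (ys ! q) else 0)"
proof -
  have l: "length xs = L" "length ys = L" using xs ys by (auto simp: tuplesD)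
  define z0 where "z0 = map (\<lambda>m. if m = p \<or> m = q then xs ! m else ys ! m) [0..<L]"
  have z0T: "z0 \<in> tuples N L" unfolding z0_def using xs ys by (intro tuplesI) (auto simp: tuplesD)
  have z0n: "m < L \<Longrightarrow> z0 ! m = (if m = p \<or> m = q then xs ! m else ys ! m)" for m
    by (simp add: z0_def)
  have other: "emb L j k A xs zs * emb L p q B zs ys = 0" if "zs \<in> tuples N L" "zs \<noteq> z0" for zs
  proof (rule ccontr)
    assume "emb L j k A xs zs * emb L p q B zs ys \<noteq> 0"
    then have a1: "\<forall>m<L. m \<noteq> j \<longrightarrow> m \<noteq> k \<longrightarrow> xs ! m = zs ! m"
      and a2: "\<forall>m<L. m \<noteq> p \<longrightarrow> m \<noteq> q \<longrightarrow> zs ! m = ys ! m"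
      by (auto simp: emb_def split: if_splits)
    have "zs = z0"
      using that(1) z0T
    proof (rule tuples_eqI)
      fix m assume "m < L"
      then show "zs ! m = z0 ! m" using a1 a2 jk by (auto simp: z0n)
    qed
    then show False using that by simp
  qed
  have "mmul N L (emb L j k A) (emb L p q B) xs ys = emb L j k A xs z0 * emb L p q B z0 ys"
    unfolding mmul_def by (rule sum_eq_single[OF finite_tuples z0T]) (use other in auto)
  also have "\<dots> = (if (\<forall>m<L. m \<noteq> j \<longrightarrow> m \<noteq> k \<longrightarrow> m \<noteq> p \<longrightarrow> m \<noteq> q \<longrightarrow> xs ! m = ys ! m)
     then A (xs ! j) (xs ! k) (ys ! j) (ys ! k) * B (xs ! p) (xs ! q) (ys ! p) (ys ! q) else 0)"
  proof -
    have "(\<forall>m<L. m \<noteq> j \<longrightarrow> m \<noteq> k \<longrightarrow> xs ! m = z0 ! m) \<longleftrightarrow>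
          (\<forall>m<L. m \<noteq> j \<longrightarrow> m \<noteq> k \<longrightarrow> m \<noteq> p \<longrightarrow> m \<noteq> q \<longrightarrow> xs ! m = ys ! m)"
      by (auto simp: z0n)
    moreover have "\<forall>m<L. m \<noteq> p \<longrightarrow> m \<noteq> q \<longrightarrow> z0 ! m = ys ! m" by (auto simp: z0n)
    ultimately show ?thesis using jk unfolding emb_def by (auto simp: z0n)
  qed
  finally show ?thesis .
qed

lemma restr_emb_commute_disjoint:
  assumes "j < L" "k < L" "p < L" "q < L" "j \<noteq> p" "j \<noteq> q" "k \<noteq> p" "k \<noteq> q"
  shows "mmul N L (restr N L (emb L j k A)) (restr N L (emb L p q B))
      = mmul N L (restr N L (emb L p q B)) (restr N L (emb L j k A))"
  unfolding restr_mmul[symmetric] using assms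
  by (auto simp: fun_eq_iff restr_def mmul_emb_disjoint mult.commute intro!: if_cong)

section \<open>Relations of the R-hat operators\<close>

lemma rPswap_rPswap_left: "j < L \<Longrightarrow> k < L \<Longrightarrow> j \<noteq> k \<Longrightarrow> restricted N L X \<Longrightarrow>
  mmul N L (rPswap N L j k) (mmul N L (rPswap N L j k) X) = X"
  by (simp add: mmul_assoc[symmetric] rPswap_rPswap mmul_idop_left)

lemma emb_rPswap_exchange:
  assumes "j < L" "k < L" "j \<noteq> k" "p < L" "q < L" "restricted N L X"
  shows "mmul N L (restr N L (emb L p q M)) (mmul N L (rPswap N L j k) X)
       = mmul N L (rPswap N L j k)
           (mmul N L (restr N L (emb L (transpose j k p) (transpose j k q) M)) X)"
proof -
  have "mmul N L (rPswap N L j k)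
      (mmul N L (restr N L (emb L (transpose j k p) (transpose j k q) M)) X)
      = mmul N L (rPswap N L j k)
          (mmul N L (mmul N L (rPswap N L j k)
          (mmul N L (restr N L (emb L p q M)) (rPswap N L j k))) X)"
    by (simp add: rPswap_conj_emb assms)
  also have "\<dots>
      = mmul N L (rPswap N L j k)
      (mmul N L (rPswap N L j k)
      (mmul N L (restr N L (emb L p q M)) (mmul N L (rPswap N L j k) X)))"
    by (simp add: mmul_assoc)
  also have "\<dots> = mmul N L (restr N L (emb L p q M)) (mmul N L (rPswap N L j k) X)"
    using assms by (simp add: rPswap_rPswap_left)
  finally show ?thesis by simp
qed

definition rRop :: "(nat \<Rightarrow> 'p \<Rightarrow> 'p \<Rightarrow> complex) \<Rightarrow> (nat \<Rightarrow> nat \<Rightarrow> 'p \<Rightarrow> 'p \<Rightarrow> complex)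
    \<Rightarrow> (nat \<Rightarrow> nat \<Rightarrow> 'p \<Rightarrow> 'p \<Rightarrow> complex) \<Rightarrow> nat \<Rightarrow> nat \<Rightarrow> nat \<Rightarrow> nat \<Rightarrow> 'p \<Rightarrow> 'p \<Rightarrow> op" where
  "rRop a b c N L j k u v = restr N L (Rop a b c L j k u v)"

lemma restricted_rRop[simp]: "restricted N L (rRop a b c N L j k u v)" by (simp add: rRop_def)

lemma restr_Rhat: "restr N L (Rhat N L a b c \<xi> j)
    = mmul N L (rPswap N L j (Suc j)) (rRop a b c N L j (Suc j) (\<xi> j) (\<xi> (Suc j)))"
  by (simp add: Rhat_def restr_mmul rPswap_def rRop_def)

lemma rRop_eq_emb_window:
  "p \<le> j \<Longrightarrow> j < p + w \<Longrightarrow> p \<le> k \<Longrightarrow> k < p + w \<Longrightarrow> p + w \<le> L \<Longrightarrow>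
   rRop a b c N L j k u v = restr N L (emb_window L p w (Rop a b c w (j - p) (k - p) u v))"
  unfolding rRop_def Rop_def by (rule restr_emb_eq_emb_window)

lemma rRop_rPswap_exchange:
  assumes "j < L" "k < L" "j \<noteq> k" "p < L" "q < L" "restricted N L X"
  shows "mmul N L (rRop a b c N L p q u v) (mmul N L (rPswap N L j k) X)
       = mmul N L (rPswap N L j k)
           (mmul N L (rRop a b c N L (transpose j k p) (transpose j k q) u v) X)"
  unfolding rRop_def Rop_def by (rule emb_rPswap_exchange[OF assms])

lemma mmul_pairs_commute_disjoint:
  assumes "j < L" "k < L" "p < L" "q < L" "j \<noteq> p" "j \<noteq> q" "k \<noteq> p" "k \<noteq> q"
  shows "mmul N L (mmul N L (restr N L (emb L j k A1)) (restr N L (emb L j k A2)))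
      (mmul N L (restr N L (emb L p q B1)) (restr N L (emb L p q B2)))
       = mmul N L (mmul N L (restr N L (emb L p q B1)) (restr N L (emb L p q B2)))
           (mmul N L (restr N L (emb L j k A1)) (restr N L (emb L j k A2)))"
proof -
  have c: "mmul N L (restr N L (emb L j k A)) (restr N L (emb L p q B))
      = mmul N L (restr N L (emb L p q B)) (restr N L (emb L j k A))" for A B
    using assms by (rule restr_emb_commute_disjoint)
  let ?A1 = "restr N L (emb L j k A1)" and ?A2 = "restr N L (emb L j k A2)"
    and ?B1 = "restr N L (emb L p q B1)" and ?B2 = "restr N L (emb L p q B2)"
  have "mmul N L (mmul N L ?A1 ?A2) (mmul N L ?B1 ?B2)
      = mmul N L ?A1 (mmul N L ?A2 (mmul N L ?B1 ?B2))"
    by (simp add: mmul_assoc)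
  also have "\<dots> = mmul N L ?A1 (mmul N L ?B1 (mmul N L ?A2 ?B2))"
      by (simp add: mmul_left_commute[OF c])
  also have "\<dots> = mmul N L ?A1 (mmul N L ?B1 (mmul N L ?B2 ?A2))" by (simp add: c)
  also have "\<dots> = mmul N L ?B1 (mmul N L ?A1 (mmul N L ?B2 ?A2))"
      by (simp add: mmul_left_commute[OF c])
  also have "\<dots> = mmul N L ?B1 (mmul N L ?B2 (mmul N L ?A1 ?A2))"
      by (simp add: mmul_left_commute[OF c])
  also have "\<dots> = mmul N L (mmul N L ?B1 ?B2) (mmul N L ?A1 ?A2)" by (simp add: mmul_assoc)
  finally show ?thesis .
qed

lemma Rhat_far_comm:
  assumes "Suc i < g" "Suc g < L"
  shows "mmul N L (restr N L (Rhat N L a b c (\<xi> \<circ> adjsw i) g)) (restr N L (Rhat N L a b c \<xi> i))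
       = mmul N L (restr N L (Rhat N L a b c (\<xi> \<circ> adjsw g) i)) (restr N L (Rhat N L a b c \<xi> g))"
proof -
  have e: "(\<xi> \<circ> adjsw i) g = \<xi> g" "(\<xi> \<circ> adjsw i) (Suc g) = \<xi> (Suc g)"
       "(\<xi> \<circ> adjsw g) i = \<xi> i" "(\<xi> \<circ> adjsw g) (Suc i) = \<xi> (Suc i)"
    using assms by (auto simp: adjsw_def)
  show ?thesis unfolding restr_Rhat e unfolding rPswap_def Pswap_def rRop_def Rop_def
    by (rule mmul_pairs_commute_disjoint) (use assms in auto)
qed

lemma hatprod_append:
  "restr N L (hatprod N L a b c \<xi> (u @ v)) =
   restr N L (mmul N L (hatprod N L a b c (\<xi> \<circ> word_perm u) v) (hatprod N L a b c \<xi> u))"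
proof (induction u arbitrary: \<xi>)
  case Nil
  show ?case by (simp add: restr_mmul mmul_idop_right)
next
  case (Cons i u)
  have "restr N L (hatprod N L a b c \<xi> ((i # u) @ v))
      = mmul N L (restr N L (hatprod N L a b c (\<xi> \<circ> adjsw i) (u @ v)))
          (restr N L (Rhat N L a b c \<xi> i))"
    by (simp add: restr_mmul)
  also have "\<dots> = mmul N L (mmul N L (restr N L (hatprod N L a b c (\<xi> \<circ> adjsw i \<circ> word_perm u) v))
        (restr N L (hatprod N L a b c (\<xi> \<circ> adjsw i) u))) (restr N L (Rhat N L a b c \<xi> i))"
    by (simp only: Cons restr_mmul)
  also have "\<dots>
      = restr N L
      (mmul N L (hatprod N L a b c (\<xi> \<circ> word_perm (i # u)) v) (hatprod N L a b c \<xi> (i # u)))"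
    by (simp add: restr_mmul mmul_assoc comp_assoc)
  finally show ?case .
qed

lemma is_decomp_canon_word: "s permutes {0..<L} \<Longrightarrow> is_decomp L s (canon_word L s)"
  using word_perm_canon[of s L] canon_word_valid[of L s]
      unfolding is_decomp_def word_perm_def by auto

lemma min_decomp_valid:
  assumes "s permutes {0..<L}"
  shows "(\<forall>i\<in>set (min_decomp L s). Suc i < L) \<and> word_perm (min_decomp L s) = s"
proof -
  have "\<exists>w. is_decomp L s w \<and> (\<forall>v. is_decomp L s v \<longrightarrow> length w \<le> length v)"
    by (rule ex_has_least_nat[where P="is_decomp L s"
        and m=length, OF is_decomp_canon_word[OF assms]])
  then have "is_decomp L s (min_decomp L s)"
    unfolding min_decomp_def by (rule someI_ex[THEN conjunct1])
  then show ?thesis by (simp add: is_decomp_def word_perm_def)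
qed

text \<open>The operator hat R^{\<sigma>^{-1}} as a function of \<sigma> alone; hatprod_min_decomp below shows that
  the choice of a reduced word for \<sigma> does not matter.\<close>
definition Rhat_perm :: "nat \<Rightarrow> nat \<Rightarrow> (nat \<Rightarrow> 'p \<Rightarrow> 'p \<Rightarrow> complex) \<Rightarrow> (nat \<Rightarrow> nat \<Rightarrow> 'p \<Rightarrow> 'p \<Rightarrow> complex)
    \<Rightarrow> (nat \<Rightarrow> nat \<Rightarrow> 'p \<Rightarrow> 'p \<Rightarrow> complex) \<Rightarrow> (nat \<Rightarrow> 'p) \<Rightarrow> (nat \<Rightarrow> nat) \<Rightarrow> op" where
  "Rhat_perm N L a b c \<xi> \<sigma> = restr N L (hatprod N L a b c \<xi> (canon_word L \<sigma>))"

locale unitary_YBE =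
  fixes N :: nat and a :: "nat \<Rightarrow> 'p \<Rightarrow> 'p \<Rightarrow> complex" and b c :: "nat \<Rightarrow> nat \<Rightarrow> 'p \<Rightarrow> 'p \<Rightarrow> complex"
  assumes unitarity: "\<And>x y. opeq N 2 (mmul N 2 (Rop a b c 2 0 1 x y) (Rop a b c 2 1 0 y x)) idop"
    and YBE: "\<And>x y z. opeq N 3
        (mmul N 3 (Rop a b c 3 0 1 x y) (mmul N 3 (Rop a b c 3 0 2 x z) (Rop a b c 3 1 2 y z)))
        (mmul N 3 (Rop a b c 3 1 2 y z) (mmul N 3 (Rop a b c 3 0 2 x z) (Rop a b c 3 0 1 x y)))"
begin

lemma rRop_unitarity:
  assumes bL: "Suc j < L"
  shows "mmul N L (rRop a b c N L (Suc j) j y x) (rRop a b c N L j (Suc j) x y) = restr N L idop"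
proof -
  have lift: "mmul N L (rRop a b c N L j (Suc j) y x) (rRop a b c N L (Suc j) j x y)
      = restr N L idop"
  proof -
    have "mmul N L (rRop a b c N L j (Suc j) y x) (rRop a b c N L (Suc j) j x y)
       = mmul N L (restr N L (emb_window L j 2 (Rop a b c 2 0 1 y x)))
           (restr N L (emb_window L j 2 (Rop a b c 2 1 0 x y)))"
      using bL by (simp add: rRop_eq_emb_window[where p=j and w=2])
    also have "\<dots>
        = restr N L (emb_window L j 2 (mmul N 2 (Rop a b c 2 0 1 y x) (Rop a b c 2 1 0 x y)))"
      using bL by (simp add: restr_emb_window_mmul)
    also have "\<dots> = restr N L (emb_window L j 2 idop)"
      using bL unitarity by (intro restr_emb_window_cong) auto
    also have "\<dots> = restr N L idop" using bL by (simp add: restr_emb_window_idop)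
    finally show ?thesis .
  qed
  have j: "j < L" "Suc j < L" "j \<noteq> Suc j" using bL by auto
  have c1: "rRop a b c N L (Suc j) j y x
      = mmul N L (rPswap N L j (Suc j))
      (mmul N L (rRop a b c N L j (Suc j) y x) (rPswap N L j (Suc j)))"
    unfolding rRop_def Rop_def using rPswap_conj_emb[OF j, of j "Suc j"] j
    by (simp add: transpose_def)
  have c2: "rRop a b c N L j (Suc j) x y
      = mmul N L (rPswap N L j (Suc j))
      (mmul N L (rRop a b c N L (Suc j) j x y) (rPswap N L j (Suc j)))"
    unfolding rRop_def Rop_def using rPswap_conj_emb[OF j, of "Suc j" j] j
    by (simp add: transpose_def)
  have "mmul N L (rRop a b c N L (Suc j) j y x) (rRop a b c N L j (Suc j) x y)
      = mmul N L (rPswap N L j (Suc j))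
          (mmul N L (rRop a b c N L j (Suc j) y x) (mmul N L (rPswap N L j (Suc j))
          (mmul N L (rPswap N L j (Suc j))
              (mmul N L (rRop a b c N L (Suc j) j x y) (rPswap N L j (Suc j))))))"
    by (subst c1, subst c2) (simp add: mmul_assoc)
  also have "\<dots>
      = mmul N L (rPswap N L j (Suc j))
      (mmul N L (mmul N L (rRop a b c N L j (Suc j) y x) (rRop a b c N L (Suc j) j x y))
      (rPswap N L j (Suc j)))"
    using j by (simp add: rPswap_rPswap_left mmul_assoc)
  also have "\<dots> = restr N L idop" using j by (simp add: lift mmul_idop_left rPswap_rPswap)
  finally show ?thesis .
qed

lemma Rhat_inverse:
  assumes bL: "Suc j < L"
  shows "mmul N L (restr N L (Rhat N L a b c (\<xi> \<circ> adjsw j) j)) (restr N L (Rhat N L a b c \<xi> j))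
      = restr N L idop"
proof -
  have e: "(\<xi> \<circ> adjsw j) j = \<xi> (Suc j)" "(\<xi> \<circ> adjsw j) (Suc j) = \<xi> j" by (auto simp: adjsw_def)
  have l: "j < L" "Suc j < L" "j \<noteq> Suc j" using bL by auto
  have "mmul N L (mmul N L (rPswap N L j (Suc j)) (rRop a b c N L j (Suc j) (\<xi> (Suc j)) (\<xi> j)))
          (mmul N L (rPswap N L j (Suc j)) (rRop a b c N L j (Suc j) (\<xi> j) (\<xi> (Suc j))))
      = mmul N L (rPswap N L j (Suc j)) (mmul N L (rRop a b c N L j (Suc j) (\<xi> (Suc j)) (\<xi> j))
          (mmul N L (rPswap N L j (Suc j)) (rRop a b c N L j (Suc j) (\<xi> j) (\<xi> (Suc j)))))"
    by (simp add: mmul_assoc)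
  also have "\<dots>
      = mmul N L (rPswap N L j (Suc j))
      (mmul N L (rPswap N L j (Suc j)) (mmul N L (rRop a b c N L (Suc j) j (\<xi> (Suc j)) (\<xi> j))
          (rRop a b c N L j (Suc j) (\<xi> j) (\<xi> (Suc j)))))"
    using l by (subst rRop_rPswap_exchange) (auto simp: transpose_def)
  also have "\<dots> = restr N L idop"
    using l by (simp add: rPswap_rPswap_left rRop_unitarity[OF bL])
  finally show ?thesis unfolding restr_Rhat e .
qed

lemma rRop_YBE:
  assumes bL: "Suc (Suc j) < L"
  shows "mmul N L (rRop a b c N L j (Suc j) x y)
      (mmul N L (rRop a b c N L j (Suc (Suc j)) x z) (rRop a b c N L (Suc j) (Suc (Suc j)) y z))
       = mmul N L (rRop a b c N L (Suc j) (Suc (Suc j)) y z)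
           (mmul N L (rRop a b c N L j (Suc (Suc j)) x z) (rRop a b c N L j (Suc j) x y))"
proof -
  have w: "j + 3 \<le> L" using bL by simp
  have r1: "rRop a b c N L j (Suc j) x y = restr N L (emb_window L j 3 (Rop a b c 3 0 1 x y))"
    using w by (subst rRop_eq_emb_window[where p=j and w=3]) auto
  have r2: "rRop a b c N L j (Suc (Suc j)) x z = restr N L (emb_window L j 3 (Rop a b c 3 0 2 x z))"
    using w by (subst rRop_eq_emb_window[where p=j and w=3]) auto
  have r3: "rRop a b c N L (Suc j) (Suc (Suc j)) y z
      = restr N L (emb_window L j 3 (Rop a b c 3 1 2 y z))"
    using w by (subst rRop_eq_emb_window[where p=j and w=3]) auto
  show ?thesis unfolding r1 r2 r3 restr_emb_window_mmul[OF w]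
      by (rule restr_emb_window_cong[OF w YBE])
qed

text \<open>Moving the R's through the P's relabels their sites; afterwards the Yang-Baxter equation
  and the braid relation of the P's apply.\<close>
lemma rPswap_rRop_braid:
  assumes bL: "Suc (Suc j) < L"
  shows "mmul N L (mmul N L (rPswap N L j (Suc j)) (rRop a b c N L j (Suc j) y z))
          (mmul N L (mmul N L (rPswap N L (Suc j) (Suc (Suc j)))
              (rRop a b c N L (Suc j) (Suc (Suc j)) x z))
            (mmul N L (rPswap N L j (Suc j)) (rRop a b c N L j (Suc j) x y)))
       = mmul N L (mmul N L (rPswap N L (Suc j) (Suc (Suc j)))
           (rRop a b c N L (Suc j) (Suc (Suc j)) x y))
          (mmul N L (mmul N L (rPswap N L j (Suc j)) (rRop a b c N L j (Suc j) x z))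
            (mmul N L (rPswap N L (Suc j) (Suc (Suc j)))
                (rRop a b c N L (Suc j) (Suc (Suc j)) y z)))"
    (is "?L = ?R")
proof -
  let ?m = "mmul N L"
  let ?P0 = "rPswap N L j (Suc j)" and ?P1 = "rPswap N L (Suc j) (Suc (Suc j))"
  let ?R01 = "rRop a b c N L j (Suc j)" and ?R02 = "rRop a b c N L j (Suc (Suc j))"
    and ?R12 = "rRop a b c N L (Suc j) (Suc (Suc j))"
  have l: "j < L" "Suc j < L" "Suc (Suc j) < L" using bL by auto
  have st: "?m (rRop a b c N L p q u v) (?m (rPswap N L i k) X)
      = ?m (rPswap N L i k) (?m (rRop a b c N L (transpose i k p) (transpose i k q) u v) X)"
    if "i < L" "k < L" "i \<noteq> k" "p < L" "q < L" "restricted N L X" for i k p q u v X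
    using that by (rule rRop_rPswap_exchange)
  have s1: "?m (?R01 y z) (?m ?P1 X) = ?m ?P1 (?m (?R02 y z) X)" if "restricted N L X" for X
    using st[of "Suc j" "Suc (Suc j)" j "Suc j" X y z] l that by (simp add: transpose_def)
  have s2: "?m (?R12 x z) (?m ?P0 X) = ?m ?P0 (?m (?R02 x z) X)" if "restricted N L X" for X
    using st[of j "Suc j" "Suc j" "Suc (Suc j)" X x z] l that by (simp add: transpose_def)
  have s3: "?m (?R02 y z) (?m ?P0 X) = ?m ?P0 (?m (?R12 y z) X)" if "restricted N L X" for X
    using st[of j "Suc j" j "Suc (Suc j)" X y z] l that by (simp add: transpose_def)
  have s4: "?m (?R01 x z) (?m ?P1 X) = ?m ?P1 (?m (?R02 x z) X)" if "restricted N L X" for X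
    using st[of "Suc j" "Suc (Suc j)" j "Suc j" X x z] l that by (simp add: transpose_def)
  have s5: "?m (?R12 x y) (?m ?P0 X) = ?m ?P0 (?m (?R02 x y) X)" if "restricted N L X" for X
    using st[of j "Suc j" "Suc j" "Suc (Suc j)" X x y] l that by (simp add: transpose_def)
  have s6: "?m (?R02 x y) (?m ?P1 X) = ?m ?P1 (?m (?R01 x y) X)" if "restricted N L X" for X
    using st[of "Suc j" "Suc (Suc j)" j "Suc (Suc j)" X x y] l that by (simp add: transpose_def)
  have "?L = ?m ?P0 (?m (?R01 y z) (?m ?P1 (?m (?R12 x z) (?m ?P0 (?R01 x y)))))"
    by (simp add: mmul_assoc)
  also have "\<dots> = ?m ?P0 (?m ?P1 (?m ?P0 (?m (?R12 y z) (?m (?R02 x z) (?R01 x y)))))"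
    by (simp add: s1 s2 s3)
  also have "\<dots> = ?m ?P0 (?m ?P1 (?m ?P0 (?m (?R01 x y) (?m (?R02 x z) (?R12 y z)))))"
    using rRop_YBE[OF bL, of x y z] by simp
  also have "\<dots> = ?m (?m ?P0 (?m ?P1 ?P0)) (?m (?R01 x y) (?m (?R02 x z) (?R12 y z)))"
    by (simp add: mmul_assoc)
  also have "\<dots> = ?m (?m ?P1 (?m ?P0 ?P1)) (?m (?R01 x y) (?m (?R02 x z) (?R12 y z)))"
    using rPswap_braid[OF bL] by simp
  also have "\<dots> = ?m ?P1 (?m ?P0 (?m ?P1 (?m (?R01 x y) (?m (?R02 x z) (?R12 y z)))))"
    by (simp add: mmul_assoc)
  also have "\<dots> = ?m ?P1 (?m (?R12 x y) (?m ?P0 (?m (?R01 x z) (?m ?P1 (?R12 y z)))))"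
    by (simp add: s4 s5 s6)
  also have "\<dots> = ?R" by (simp add: mmul_assoc)
  finally show ?thesis .
qed

lemma Rhat_braid:
  assumes bL: "Suc (Suc j) < L"
  shows "mmul N L (restr N L (Rhat N L a b c (\<xi> \<circ> adjsw j \<circ> adjsw (Suc j)) j))
           (mmul N L (restr N L (Rhat N L a b c (\<xi> \<circ> adjsw j) (Suc j)))
               (restr N L (Rhat N L a b c \<xi> j)))
       = mmul N L (restr N L (Rhat N L a b c (\<xi> \<circ> adjsw (Suc j) \<circ> adjsw j) (Suc j)))
           (mmul N L (restr N L (Rhat N L a b c (\<xi> \<circ> adjsw (Suc j)) j))
               (restr N L (Rhat N L a b c \<xi> (Suc j))))"
proof -
  have e: "(\<xi> \<circ> adjsw j \<circ> adjsw (Suc j)) j = \<xi> (Suc j)"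
    "(\<xi> \<circ> adjsw j \<circ> adjsw (Suc j)) (Suc j) = \<xi> (Suc (Suc j))"
    "(\<xi> \<circ> adjsw j) (Suc j) = \<xi> j" "(\<xi> \<circ> adjsw j) (Suc (Suc j)) = \<xi> (Suc (Suc j))"
    "(\<xi> \<circ> adjsw (Suc j) \<circ> adjsw j) (Suc j) = \<xi> j"
    "(\<xi> \<circ> adjsw (Suc j) \<circ> adjsw j) (Suc (Suc j)) = \<xi> (Suc j)"
    "(\<xi> \<circ> adjsw (Suc j)) j = \<xi> j" "(\<xi> \<circ> adjsw (Suc j)) (Suc j) = \<xi> (Suc (Suc j))"
    by (auto simp: adjsw_def)
  show ?thesis unfolding restr_Rhat e by (rule rPswap_rRop_braid[OF bL])
qed

lemma hatprod_canon_word: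
  assumes w: "\<forall>i\<in>set w. Suc i < L"
  shows "restr N L (hatprod N L a b c \<xi> w)
      = restr N L (hatprod N L a b c \<xi> (canon_word L (word_perm w)))"
proof -
  interpret wr: braid_cocycle "mmul N L" "restr N L idop" "\<lambda>\<xi> i. restr N L (Rhat N L a b c \<xi> i)" L
      "{A. restricted N L A}"
    by unfold_locales
        (auto simp: mmul_assoc mmul_idop_left mmul_idop_right Rhat_inverse Rhat_braid
        intro: Rhat_far_comm)
  have wprod: "restr N L (hatprod N L a b c \<xi>' v) = wr.wprod \<xi>' v" for v \<xi>'
    by (induction v arbitrary: \<xi>') (simp_all add: restr_mmul)
  show ?thesis unfolding wprod using w by (rule wr.wprod_canon_word)
qed

lemma hatprod_min_decomp:
  "s permutes {0..<L} \<Longrightarrow> restr N L (hatprod N L a b c \<xi> (min_decomp L s)) = Rhat_perm N L a b c \<xi> s"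
  using hatprod_canon_word[of "min_decomp L s"] min_decomp_valid[of s L]
  by (auto simp: Rhat_perm_def)

lemma Rhat_perm_comp:
  assumes "s permutes {0..<L}" "t permutes {0..<L}"
  shows "mmul N L (Rhat_perm N L a b c (\<xi> \<circ> s) t) (Rhat_perm N L a b c \<xi> s)
      = Rhat_perm N L a b c \<xi> (s \<circ> t)"
proof -
  have v: "\<forall>i\<in>set (canon_word L s @ canon_word L t). Suc i < L" using canon_word_valid[of L] by auto
  have "mmul N L (Rhat_perm N L a b c (\<xi> \<circ> s) t) (Rhat_perm N L a b c \<xi> s)
      = restr N L (hatprod N L a b c \<xi> (canon_word L s @ canon_word L t))"
    using hatprod_append[of N L a b c \<xi> "canon_word L s"
        "canon_word L t"] word_perm_canon[OF assms(1)]
    by (simp add: Rhat_perm_def restr_mmul)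
  also have "\<dots>
      = restr N L
      (hatprod N L a b c \<xi> (canon_word L (word_perm (canon_word L s @ canon_word L t))))"
    by (rule hatprod_canon_word[OF v])
  also have "word_perm (canon_word L s @ canon_word L t) = s \<circ> t"
    using word_perm_canon[OF assms(1)] word_perm_canon[OF assms(2)] by (simp add: word_perm_append)
  finally show ?thesis by (simp only: Rhat_perm_def)
qed

end

section \<open>The normalisation factor\<close>

definition equal_pairs :: "nat \<Rightarrow> nat list \<Rightarrow> (nat \<times> nat) set" where
  "equal_pairs L g = {(i, j). i < j \<and> j < L \<and> g ! i = g ! j}"

text \<open>The diagonal entry of Ncal at the tuple g, see Ncal_entry.\<close>
definition Nfactor :: "nat \<Rightarrow> (nat \<Rightarrow> 'p \<Rightarrow> 'p \<Rightarrow> complex) \<Rightarrow> nat list \<Rightarrow> (nat \<Rightarrow> 'p) \<Rightarrow> complex" where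
  "Nfactor L sq g \<zeta> = (\<Prod>(i, j)\<in>equal_pairs L g. sq (g ! i) (\<zeta> i) (\<zeta> j))"

lemma finite_equal_pairs [simp]: "finite (equal_pairs L g)"
proof -
  have "equal_pairs L g \<subseteq> {..<L} \<times> {..<L}" by (auto simp: equal_pairs_def)
  then show ?thesis by (rule finite_subset) auto
qed

text \<open>Exchanging \<zeta> i and \<zeta> (Suc i) permutes all factors except the one of the pair (i, Suc i),
  which is replaced by its inverse.\<close>
lemma Nfactor_step:
  assumes "Suc i < L" "g ! i = g ! Suc i" "g ! i < N"
    and sq_sq: "\<And>k x y. k < N \<Longrightarrow> (sq k x y)\<^sup>2 = a k x y"
    and sq_inv: "\<And>k x y. k < N \<Longrightarrow> sq k x y * sq k y x = 1"
  shows "Nfactor L sq g (\<zeta> \<circ> adjsw i) * a (g ! i) (\<zeta> i) (\<zeta> (Suc i)) = Nfactor L sq g \<zeta>"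
proof -
  define E where "E = equal_pairs L g"
  define E' where "E' = E - {(i, Suc i)}"
  have e0: "(i, Suc i) \<in> E" using assms by (simp add: E_def equal_pairs_def)
  have gs: "g ! adjsw i x = g ! x" for x using assms(2) by (simp add: adjsw_def)
  define f1 where "f1 = (\<lambda>(p, q). sq (g ! p) (\<zeta> (adjsw i p)) (\<zeta> (adjsw i q)))"
  define f2 where "f2 = (\<lambda>(p, q). sq (g ! p) (\<zeta> p) (\<zeta> q))"
  have r1: "Nfactor L sq g (\<zeta> \<circ> adjsw i) = sq (g ! i) (\<zeta> (Suc i)) (\<zeta> i) * prod f1 E'"
    unfolding Nfactor_def E'_def E_def[symmetric]
    by (subst prod.remove[OF _ e0]) (simp_all add: E_def f1_def adjsw_def)
  have r3: "Nfactor L sq g \<zeta> = sq (g ! i) (\<zeta> i) (\<zeta> (Suc i)) * prod f2 E'"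
    unfolding Nfactor_def E'_def E_def[symmetric]
    by (subst prod.remove[OF _ e0]) (simp_all add: E_def f2_def)
  define phi where "phi = (\<lambda>(p::nat, q::nat). (adjsw i p, adjsw i q))"
  have phiE: "phi x \<in> E'" if "x \<in> E'" for x
    using that assms(1,2) unfolding phi_def E'_def E_def equal_pairs_def
    by (auto simp: gs adjsw_def split: if_splits)
  have phiphi: "phi (phi x) = x" for x by (auto simp: phi_def split: prod.splits)
  have r2: "prod f1 E' = prod f2 E'"
  proof (rule prod.reindex_bij_witness[where i=phi and j=phi])
    fix x assume x: "x \<in> E'"
    show "phi (phi x) = x" by (rule phiphi)
    show "phi x \<in> E'" using x by (rule phiE)
    show "f2 (phi x) = f1 x" by (auto simp: f1_def f2_def phi_def gs split: prod.splits)
  qed (auto simp: phiphi phiE)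
  have k: "g ! i < N" by fact
  show ?thesis
    unfolding r1 r2 r3 sq_sq[OF k, symmetric]
    using sq_inv[OF k, of "\<zeta> i" "\<zeta> (Suc i)"]
    by (simp add: power2_eq_square algebra_simps)
qed

lemma swap_sites_flat: "length g = L \<Longrightarrow> Suc i < L \<Longrightarrow> g ! i = g ! Suc i \<Longrightarrow> swap_sites i (Suc i) g = g"
  by (rule nth_equalityI) (auto simp: swap_sites_nth transpose_def)

lemma Rhat_flat:
  assumes g: "g \<in> tuples N L" and ys: "ys \<in> tuples N L" and i: "Suc i < L"
      and f: "g ! i = g ! Suc i"
  shows "Rhat N L a b c \<zeta> i g ys = (if ys = g then a (g ! i) (\<zeta> i) (\<zeta> (Suc i)) else 0)"
proof -
  have l: "length g = L" "length ys = L" using g ys by (auto simp: tuplesD)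
  have "Rhat N L a b c \<zeta> i g ys = Rop a b c L i (Suc i) (\<zeta> i) (\<zeta> (Suc i)) g ys"
    unfolding Rhat_def using i g by (simp add: mmul_Pswap_left swap_sites_flat[OF l(1) i f])
  also have "\<dots> = (if ys = g then a (g ! i) (\<zeta> i) (\<zeta> (Suc i)) else 0)"
  proof -
    have "(\<forall>m<L. m \<noteq> i \<longrightarrow> m \<noteq> Suc i \<longrightarrow> g ! m = ys ! m) \<and> ys ! i = g ! i \<and> ys ! Suc i = g ! Suc i
          \<longleftrightarrow> ys = g"
    proof
      assume a: "(\<forall>m<L. m \<noteq> i \<longrightarrow> m \<noteq> Suc i \<longrightarrow> g ! m = ys ! m) \<and> ys ! i = g ! i
          \<and> ys ! Suc i = g ! Suc i"
      show "ys = g"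
      proof (rule nth_equalityI)
        show "length ys = length g" using l by simp
        fix m assume "m < length ys"
        then show "ys ! m = g ! m" using a l by (cases "m = i \<or> m = Suc i") auto
      qed
    qed auto
    then show ?thesis unfolding Rop_def emb_def Rmat_def using f by auto
  qed
  finally show ?thesis .
qed

lemma hatprod_flat:
  assumes g: "g \<in> tuples N L" and ys: "ys \<in> tuples N L"
    and w: "\<forall>i\<in>set w. Suc i < L \<and> g ! i = g ! Suc i"
    and sq_sq: "\<And>k x y. k < N \<Longrightarrow> (sq k x y)\<^sup>2 = a k x y"
    and sq_inv: "\<And>k x y. k < N \<Longrightarrow> sq k x y * sq k y x = 1"
  shows "Nfactor L sq g (\<zeta> \<circ> word_perm w) * hatprod N L a b c \<zeta> w g ys
      = (if ys = g then Nfactor L sq g \<zeta> else 0)"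
  using w ys
proof (induction w arbitrary: \<zeta> ys)
  case Nil then show ?case by (auto simp: idop_def)
next
  case (Cons i w)
  have iL: "Suc i < L" and f: "g ! i = g ! Suc i" using Cons.prems by auto
  have ys: "ys \<in> tuples N L" using Cons.prems by simp
  have gi: "g ! i < N" using g iL by (simp add: tuplesD)
  have IH: "Nfactor L sq g (\<zeta> \<circ> adjsw i \<circ> word_perm w) * hatprod N L a b c (\<zeta> \<circ> adjsw i) w g zs
      = (if zs = g then Nfactor L sq g (\<zeta> \<circ> adjsw i) else 0)" if "zs \<in> tuples N L" for zs
    using Cons.IH[of zs "\<zeta> \<circ> adjsw i"] Cons.prems that by (simp add: comp_def)
  have "Nfactor L sq g (\<zeta> \<circ> word_perm (i # w)) * hatprod N L a b c \<zeta> (i # w) g ys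
      = (\<Sum>zs\<in>tuples N L.
          (Nfactor L sq g (\<zeta> \<circ> adjsw i \<circ> word_perm w) * hatprod N L a b c (\<zeta> \<circ> adjsw i) w g zs)
           * Rhat N L a b c \<zeta> i zs ys)"
    by (simp add: mmul_def sum_distrib_left comp_assoc mult.assoc)
  also have "\<dots>
      = (\<Sum>zs\<in>tuples N L. (if zs = g then Nfactor L sq g (\<zeta> \<circ> adjsw i)
      else 0) * Rhat N L a b c \<zeta> i zs ys)"
    by (rule sum.cong) (simp_all add: IH)
  also have "\<dots> = Nfactor L sq g (\<zeta> \<circ> adjsw i) * Rhat N L a b c \<zeta> i g ys"
    using g by (subst sum_eq_single[where z=g]) simp_all
  also have "\<dots> = (if ys = g then Nfactor L sq g \<zeta> else 0)"
    unfolding Rhat_flat[OF g ys iL f] using Nfactor_step[where sq=sq and a=a and \<zeta>=\<zeta>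
        and N=N, OF iL f gi sq_sq sq_inv] by simp
  finally show ?case .
qed

lemma sorted_nth_eq_between:
  assumes "sorted g" "m < length g" "k \<le> j" "j \<le> m" "g ! k = g ! m"
  shows "g ! j = g ! k"
proof (rule order.antisym)
  show "g ! k \<le> g ! j" using assms(1-4) sorted_nth_mono[of g k j] by simp
  show "g ! j \<le> g ! k" using assms sorted_nth_mono[of g j m] by simp
qed

lemma nth_cyc_inv_block:
  assumes block: "\<And>j. k \<le> j \<Longrightarrow> j \<le> m \<Longrightarrow> g ! j = g ! k" and "k \<le> m" "j \<le> m"
  shows "g ! cyc_inv k m j = g ! j"
proof -
  consider "j = k" | "k < j" | "j < k" by linarith
  then show ?thesis
  proof cases
    case 1 then show ?thesis using block[of m] assms(2) by (simp add: cyc_inv_def)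
  next
    case 2 then show ?thesis using block[of j] block[of "j - 1"] assms(3) by (simp add: cyc_inv_def)
  next
    case 3 then show ?thesis by (simp add: cyc_inv_def)
  qed
qed

lemma canon_word_flat:
  assumes "sorted g" "m \<le> length g" "p permutes {0..<m}" "\<forall>i<m. g ! p i = g ! i"
  shows "\<forall>i\<in>set (canon_word m p). g ! i = g ! Suc i"
  using assms(2-4)
proof (induction m arbitrary: p)
  case 0 then show ?case by simp
next
  case (Suc m)
  define k where "k = p m"
  have p_le: "p i \<le> m" if "i \<le> m" for i
    using permutes_in_image[OF Suc.prems(2), of i] that by simp
  have k: "k \<le> m" by (simp add: k_def p_le)
  have block: "g ! j = g ! k" if "k \<le> j" "j \<le> m" for j
    using sorted_nth_eq_between[OF assms(1) _ that] Suc.prems(1,3) by (simp add: k_def)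
  have "\<forall>i<m. g ! (cyc_inv k m \<circ> p) i = g ! i"
    using nth_cyc_inv_block[OF block k] p_le Suc.prems(3) by simp
  then have IH: "\<forall>i\<in>set (canon_word m (cyc_inv k m \<circ> p)). g ! i = g ! Suc i"
    using Suc.prems(1)
    by (intro Suc.IH canon_word_step_permutes[OF Suc.prems(2), folded k_def]) simp_all
  have "g ! i = g ! Suc i" if "i \<in> set [k..<m]" for i
    using that block[of i] block[of "Suc i"] by simp
  then show ?case using IH by (auto simp: k_def)
qed

lemma Nfactor_permute:
  assumes t: "t permutes {0..<L}" and sc: "starcond L t y" and ly: "length y = L"
  shows "Nfactor L sq (permute_list t y) (\<zeta> \<circ> t) = Nfactor L sq y \<zeta>"
proof -
  have tL: "t i < L" if "i < L" for i using permutes_in_image[OF t, of i] that by simp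
  have ch: "y ! t i < y ! t j \<or> (y ! t i = y ! t j \<and> t i < t j)" if "i < j" "j < L" for i j
    using starcond_chain[OF sc that] by (simp add: key_less)
  have pl: "permute_list t y ! i = y ! t i" if "i < L" for i using that ly
      by (simp add: permute_list_def)
  have it: "inv t i < L" if "i < L" for i
      using permutes_in_image[OF permutes_inv[OF t], of i] that by simp
  have tinv: "t (inv t i) = i" for i using permutes_inverses(1)[OF t] .
  have invt: "inv t (t i) = i" for i using permutes_inverses(2)[OF t] .
  show ?thesis unfolding Nfactor_def
  proof (rule prod.reindex_bij_witness[where j = "\<lambda>(i, j). (t i, t j)" and i
      = "\<lambda>(i, j). (inv t i, inv t j)"])
    fix x assume x: "x \<in> equal_pairs L (permute_list t y)"
    then obtain i j where e: "x = (i, j)" "i < j" "j < L" "y ! t i = y ! t j"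
      by (auto simp: equal_pairs_def pl)
    show "(case case x of (i, j) \<Rightarrow> (t i, t j) of (i, j) \<Rightarrow> (inv t i, inv t j)) = x"
      using e by (simp add: invt)
    show "(case x of (i, j) \<Rightarrow> (t i, t j)) \<in> equal_pairs L y"
      using e ch[of i j] tL by (auto simp: equal_pairs_def)
    show "(case case x of (i, j) \<Rightarrow> (t i, t j) of (i, j) \<Rightarrow> sq (y ! i) (\<zeta> i) (\<zeta> j)) =
          (case x of (i, j) \<Rightarrow> sq (permute_list t y ! i) ((\<zeta> \<circ> t) i) ((\<zeta> \<circ> t) j))"
      using e by (simp add: pl)
  next
    fix x assume x: "x \<in> equal_pairs L y"
    then obtain i j where e: "x = (i, j)" "i < j" "j < L" "y ! i = y ! j"
      by (auto simp: equal_pairs_def)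
    show "(case case x of (i, j) \<Rightarrow> (inv t i, inv t j) of (i, j) \<Rightarrow> (t i, t j)) = x"
      using e by (simp add: tinv)
    have "inv t i < inv t j"
    proof (rule ccontr)
      assume "\<not> inv t i < inv t j"
      moreover have "inv t i \<noteq> inv t j" using e(2) by (metis tinv less_irrefl)
      ultimately have "inv t j < inv t i" by simp
      then have "y ! t (inv t j) < y ! t (inv t i) \<or> (y ! t (inv t j) = y ! t (inv t i)
          \<and> t (inv t j) < t (inv t i))"
        using ch it e by auto
      then show False using e by (simp add: tinv)
    qed
    then show "(case x of (i, j) \<Rightarrow> (inv t i, inv t j)) \<in> equal_pairs L (permute_list t y)"
      using e it by (auto simp: equal_pairs_def pl tinv)
  qed
qed

lemma Nfactor_sort:
  assumes "t permutes {0..<L}" "starcond L t y" "length y = L"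
  shows "Nfactor L sq (sort y) (\<zeta> \<circ> t) = Nfactor L sq y \<zeta>"
  using Nfactor_permute[OF assms] starcond_sort[OF assms(2,1,3)] by simp

text \<open>On a sorted tuple, a permutation fixing it is a product of R-hat's at flat positions, each
  acting as a_k; the square roots in Nfactor absorb exactly these factors.\<close>
lemma Rhat_perm_absorb:
  assumes g: "g \<in> tuples N L" "sorted g" and p: "p permutes {0..<L}" "permute_list p g = g"
    and ys: "ys \<in> tuples N L"
    and sq_sq: "\<And>k x y. k < N \<Longrightarrow> (sq k x y)\<^sup>2 = a k x y"
    and sq_inv: "\<And>k x y. k < N \<Longrightarrow> sq k x y * sq k y x = 1"
  shows "Nfactor L sq g (\<zeta> \<circ> p) * mmul N L (Rhat_perm N L a b c \<zeta> p) B g ys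
      = Nfactor L sq g \<zeta> * B g ys"
proof -
  have lg: "length g = L" using g by (simp add: tuplesD)
  have fixed: "\<forall>i<L. g ! p i = g ! i"
  proof (intro allI impI)
    fix i assume "i < L"
    then have "permute_list p g ! i = g ! p i" using lg by (simp add: permute_list_def)
    then show "g ! p i = g ! i" using p(2) by simp
  qed
  have "\<forall>i\<in>set (canon_word L p). g ! i = g ! Suc i"
    using canon_word_flat[OF g(2) _ p(1) fixed] lg by simp
  then have flat: "\<forall>i\<in>set (canon_word L p). Suc i < L \<and> g ! i = g ! Suc i"
    using canon_word_valid[of L p] by blast
  have row: "Nfactor L sq g (\<zeta> \<circ> p) * hatprod N L a b c \<zeta> (canon_word L p) g zs
      = (if zs = g then Nfactor L sq g \<zeta> else 0)" if "zs \<in> tuples N L" for zs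
    using hatprod_flat[OF g(1) that flat sq_sq sq_inv, where \<zeta>=\<zeta> and b=b
        and c=c] word_perm_canon[OF p(1)] by simp
  have "Nfactor L sq g (\<zeta> \<circ> p) * mmul N L (Rhat_perm N L a b c \<zeta> p) B g ys
      = (\<Sum>zs\<in>tuples N L.
          (Nfactor L sq g (\<zeta> \<circ> p) * hatprod N L a b c \<zeta> (canon_word L p) g zs) * B zs ys)"
    using g(1) by (simp add: mmul_def Rhat_perm_def restr_def sum_distrib_left mult.assoc)
  also have "\<dots> = Nfactor L sq g \<zeta> * B g ys"
    using g(1) by (subst sum_eq_single[where z=g]) (simp_all add: row)
  finally show ?thesis .
qed

section \<open>Rows of F\<close>

lemma Nij_entry:
  assumes "i < L" "j < L" "i \<noteq> j" "xs \<in> tuples N L" "zs \<in> tuples N L"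
  shows "Nij L sq \<xi> i j xs zs
      = (if zs = xs then (if xs ! i = xs ! j then sq (xs ! i) (\<xi> i) (\<xi> j) else 1) else 0)"
proof (cases "zs = xs")
  case True then show ?thesis by (simp add: Nij_def emb_def)
next
  case False
  have "\<not> ((\<forall>m<L. m \<noteq> i \<longrightarrow> m \<noteq> j \<longrightarrow> xs ! m = zs ! m) \<and> zs ! i = xs ! i \<and> zs ! j = xs ! j)"
  proof
    assume a: "(\<forall>m<L. m \<noteq> i \<longrightarrow> m \<noteq> j \<longrightarrow> xs ! m = zs ! m) \<and> zs ! i = xs ! i \<and> zs ! j = xs ! j"
    have "zs = xs" using assms(5,4)
    proof (rule tuples_eqI)
      fix m assume "m < L" then show "zs ! m = xs ! m" using a by (cases "m = i \<or> m = j") auto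
    qed
    then show False using False by simp
  qed
  then show ?thesis using False unfolding Nij_def emb_def by auto
qed

lemma mprod_diagonal:
  assumes D: "\<forall>k\<in>set ks. \<forall>xs\<in>tuples N L. \<forall>zs\<in>tuples N L. D k xs zs
      = (if zs = xs then d k xs else 0)"
    and xs: "xs \<in> tuples N L" and zs: "zs \<in> tuples N L"
  shows "mprod N L (map D ks) xs zs = (if zs = xs then prod_list (map (\<lambda>k. d k xs) ks) else 0)"
  using D zs
proof (induction ks arbitrary: zs)
  case Nil then show ?case by (simp add: mprod_def idop_def)
next
  case (Cons k ks)
  have "mprod N L (map D (k # ks)) xs zs = mmul N L (D k) (mprod N L (map D ks)) xs zs"
    by (simp add: mprod_def)
  also have "\<dots> = d k xs * mprod N L (map D ks) xs zs"
    unfolding mmul_def using Cons.prems xs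
    by (subst sum_eq_single[where z=xs]) auto
  also have "\<dots> = (if zs = xs then prod_list (map (\<lambda>k. d k xs) (k # ks)) else 0)"
    using Cons by simp
  finally show ?case .
qed

lemma Ncal_entry:
  assumes xs: "xs \<in> tuples N L" and zs: "zs \<in> tuples N L"
  shows "Ncal N L sq \<xi> xs zs = (if zs = xs then Nfactor L sq xs \<xi> else 0)"
proof -
  define nd where "nd i j ys = (if ys ! i = ys ! j then sq (ys ! i) (\<xi> i) (\<xi> j) else 1)" for i j
      and ys :: "nat list"
  define dr where "dr i ys = prod_list (map (\<lambda>j. nd i j ys) (rev [Suc i..<L]))" for i ys
  have row: "\<forall>xs\<in>tuples N L. \<forall>zs\<in>tuples N L. Nrow N L sq \<xi> i xs zs
      = (if zs = xs then dr i xs else 0)"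
    if "i < L" for i
  proof (intro ballI)
    fix xs zs assume "xs \<in> tuples N L" "zs \<in> tuples N L"
    then show "Nrow N L sq \<xi> i xs zs = (if zs = xs then dr i xs else 0)"
      unfolding Nrow_def dr_def using that
      by (subst mprod_diagonal[where d = "\<lambda>j. nd i j"]) (auto simp: Nij_entry nd_def)
  qed
  have "Ncal N L sq \<xi> xs zs
      = (if zs = xs then prod_list (map (\<lambda>i. dr i xs) (rev [0..<L - 1])) else 0)"
    unfolding Ncal_def using xs zs row
    by (subst mprod_diagonal[where d = dr]) auto
  also have "prod_list (map (\<lambda>i. dr i xs) (rev [0..<L - 1])) = Nfactor L sq xs \<xi>"
  proof -
    have c: "prod_list (map f (rev [p..<q])) = prod f {p..<q}" for f :: "nat \<Rightarrow> complex" and p q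
      by (simp add: rev_map[symmetric] prod.distinct_set_conv_list[symmetric])
    have "prod_list (map (\<lambda>i. dr i xs) (rev [0..<L - 1]))
        = (\<Prod>i\<in>{0..<L - 1}. \<Prod>j\<in>{Suc i..<L}. nd i j xs)"
      by (simp add: c dr_def)
    also have "\<dots> = prod (\<lambda>(i, j). nd i j xs) (SIGMA i:{0..<L - 1}. {Suc i..<L})"
      by (rule prod.Sigma) auto
    also have "(SIGMA i:{0..<L - 1}. {Suc i..<L}) = {(i, j). i < j \<and> j < L}" by auto
    also have "prod (\<lambda>(i, j). nd i j xs) {(i, j). i < j \<and> j < L} = Nfactor L sq xs \<xi>"
      unfolding Nfactor_def
    proof (rule prod.mono_neutral_cong_right)
      have "{(i, j). i < j \<and> j < L} \<subseteq> {..<L} \<times> {..<L}" by auto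
      then show "finite {(i, j). i < j \<and> j < L}" by (rule finite_subset) auto
    qed (auto simp: equal_pairs_def nd_def split: if_splits)
    finally show ?thesis .
  qed
  finally show ?thesis .
qed

lemma mmul_proj:
  assumes "al \<in> tuples N L"
  shows "mmul N L (proj al) B xs ys = (if xs = al then B al ys else 0)"
  unfolding mmul_def proj_def using assms
  by (subst sum_eq_single[where z=al]) auto

lemma Fcal_entry:
  assumes xs: "xs \<in> tuples N L" and r: "r permutes {0..<L}" "starcond L r xs"
  shows "Fcal N L a b c \<xi> xs ys = Rsig N L a b c \<xi> r xs ys"
proof -
  have inner:
      "(\<Sum>al\<in>{al \<in> tuples N L. starcond L s al}. mmul N L (proj al) (Rsig N L a b c \<xi> s) xs ys)
      = (if starcond L s xs then Rsig N L a b c \<xi> s xs ys else 0)" for s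
  proof -
    have "(\<Sum>al\<in>{al \<in> tuples N L. starcond L s al}. mmul N L (proj al) (Rsig N L a b c \<xi> s) xs ys)
        = (\<Sum>al\<in>{al \<in> tuples N L. starcond L s al}. if al = xs then Rsig N L a b c \<xi> s xs ys else 0)"
      by (rule sum.cong) (auto simp: mmul_proj)
    also have "\<dots> = (if starcond L s xs then Rsig N L a b c \<xi> s xs ys else 0)"
      using xs by (simp add: sum.delta')
    finally show ?thesis .
  qed
  have "Fcal N L a b c \<xi> xs ys
      = (\<Sum>s\<in>{s. s permutes {0..<L}}. if starcond L s xs then Rsig N L a b c \<xi> s xs ys else 0)"
    unfolding Fcal_def inner ..
  also have "\<dots> = Rsig N L a b c \<xi> r xs ys"
  proof (subst sum_eq_single[where z=r])
    show "finite {s. s permutes {0..<L}}" by (rule finite_permutations) simp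
    show "r \<in> {s. s permutes {0..<L}}" using r by simp
    fix s assume "s \<in> {s. s permutes {0..<L}}" "s \<noteq> r"
    then show "(if starcond L s xs then Rsig N L a b c \<xi> s xs ys else 0) = 0"
      using starcond_unique[of s L r xs] r by auto
  qed (use r in simp)
  finally show ?thesis .
qed

context unitary_YBE
begin

lemma Fop_entry:
  assumes x: "x \<in> tuples N L" and zs: "zs \<in> tuples N L"
    and r: "r permutes {0..<L}" "starcond L r x"
  shows "Fop N L a b c sq \<zeta> x zs = Nfactor L sq x \<zeta> * Rhat_perm N L a b c \<zeta> r (sort x) zs"
proof -
  have g: "permute_list r x = sort x" by (rule starcond_sort[OF r(2,1) tuplesD(1)[OF x]])
  have "Fop N L a b c sq \<zeta> x zs = Nfactor L sq x \<zeta> * Fcal N L a b c \<zeta> x zs"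
    unfolding Fop_def mmul_def using x
    by (subst sum_eq_single[where z=x]) (auto simp: Ncal_entry)
  also have "Fcal N L a b c \<zeta> x zs = Rsig N L a b c \<zeta> r x zs" by (rule Fcal_entry[OF x r])
  also have "\<dots> = hatprod N L a b c \<zeta> (min_decomp L r) (sort x) zs"
    unfolding Rsig_def g[symmetric] by (rule mmul_Pmat_left[OF x r(1)])
  also have "\<dots> = Rhat_perm N L a b c \<zeta> r (sort x) zs"
    using restr_eqD[OF hatprod_min_decomp[OF r(1), unfolded Rhat_perm_def]
        permute_list_tuples[OF x r(1)] zs]
      permute_list_tuples[OF x r(1)] zs g by (simp add: Rhat_perm_def restr_def)
  finally show ?thesis .
qed

lemma mmul_Fop_left:
  assumes x: "x \<in> tuples N L" and r: "r permutes {0..<L}" "starcond L r x"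
  shows "mmul N L (Fop N L a b c sq \<zeta>) B x ys
      = Nfactor L sq x \<zeta> * mmul N L (Rhat_perm N L a b c \<zeta> r) B (sort x) ys"
  unfolding mmul_def sum_distrib_left
  by (rule sum.cong) (simp_all add: Fop_entry[OF x _ r] mult.assoc)

lemma mmul_relabel_Rsig:
  assumes \<sigma>: "\<sigma> permutes {0..<L}" and xs: "xs \<in> tuples N L" and ys: "ys \<in> tuples N L"
  shows "mmul N L (relabel N L \<sigma> X) (Rsig N L a b c \<xi> \<sigma>) xs ys
       = mmul N L X (Rhat_perm N L a b c \<xi> \<sigma>) (permute_list \<sigma> xs) ys"
proof -
  let ?H = "hatprod N L a b c \<xi> (min_decomp L \<sigma>)"
  have "mmul N L (relabel N L \<sigma> X) (Rsig N L a b c \<xi> \<sigma>) xs ys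
      = mmul N L X (mmul N L (Pmat L (inv \<sigma>)) (mmul N L (Pmat L \<sigma>) ?H)) (permute_list \<sigma> xs) ys"
    unfolding relabel_def Rsig_def by (simp add: mmul_assoc mmul_Pmat_left[OF xs \<sigma>])
  also have "\<dots> = mmul N L X (Rhat_perm N L a b c \<xi> \<sigma>) (permute_list \<sigma> xs) ys"
  proof (rule mmul_cong_tuples)
    fix zs assume zs: "zs \<in> tuples N L"
    have "mmul N L (Pmat L (inv \<sigma>)) (mmul N L (Pmat L \<sigma>) ?H) zs ys
        = ?H (permute_list \<sigma> (permute_list (inv \<sigma>) zs)) ys"
      using permutes_inv[OF \<sigma>] zs
      by (simp add: mmul_Pmat_left permute_list_tuples \<sigma>)
    also have "\<dots> = ?H zs ys" using zs by (simp add: permute_list_inv[OF \<sigma>] tuplesD)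
    also have "\<dots> = Rhat_perm N L a b c \<xi> \<sigma> zs ys"
      using restr_eqD[OF hatprod_min_decomp[OF \<sigma>, unfolded Rhat_perm_def] zs ys]
      by (simp add: Rhat_perm_def restr_def zs ys)
    finally show "mmul N L (Pmat L (inv \<sigma>)) (mmul N L (Pmat L \<sigma>) ?H) zs ys
        = Rhat_perm N L a b c \<xi> \<sigma> zs ys" .
  qed simp
  finally show ?thesis .
qed

end

lemma sorting_perms_quotient:
  assumes \<sigma>: "\<sigma> permutes {0..<L}" and xs: "length xs = L"
    and r: "r permutes {0..<L}" "starcond L r xs"
    and t: "t permutes {0..<L}" "starcond L t (permute_list \<sigma> xs)"
  obtains p where "p permutes {0..<L}" "r \<circ> p = \<sigma> \<circ> t" "permute_list p (sort xs) = sort xs"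
proof
  let ?p = "inv r \<circ> \<sigma> \<circ> t"
  show p: "?p permutes {0..<L}"
    by (intro permutes_compose[OF t(1)] permutes_compose[OF \<sigma>] permutes_inv[OF r(1)])
  show rp: "r \<circ> ?p = \<sigma> \<circ> t" by (simp add: fun_eq_iff permutes_inverses(1)[OF r(1)])
  have \<sigma>': "\<sigma> permutes {..<length xs}" using \<sigma> xs by (simp add: lessThan_atLeast0)
  have "permute_list ?p (sort xs) = permute_list (r \<circ> ?p) xs"
    using starcond_sort[OF r(2,1) xs] permute_list_permute_list[OF r(1) p xs] by simp
  also have "\<dots> = permute_list t (permute_list \<sigma> xs)"
    using permute_list_permute_list[OF \<sigma> t(1) xs] rp by simp
  also have "\<dots> = sort xs"
    using starcond_sort[OF t(2,1)] sort_permute_list[OF \<sigma>'] xs by simp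
  finally show "permute_list ?p (sort xs) = sort xs" .
qed

theorem mainTheorem1:
  fixes N L :: nat
    and a :: "nat \<Rightarrow> 'p \<Rightarrow> 'p \<Rightarrow> complex"
    and b c :: "nat \<Rightarrow> nat \<Rightarrow> 'p \<Rightarrow> 'p \<Rightarrow> complex"
    and sq :: "nat \<Rightarrow> 'p \<Rightarrow> 'p \<Rightarrow> complex"
    and \<xi> :: "nat \<Rightarrow> 'p"
    and \<sigma> :: "nat \<Rightarrow> nat"
  assumes hN: "N \<ge> 2" and hL: "L \<ge> 1"
    and a_nz: "\<And>k x y. k < N \<Longrightarrow> a k x y \<noteq> 0"
    and YBE: "\<And>x y z. opeq N 3
        (mmul N 3 (Rop a b c 3 0 1 x y) (mmul N 3 (Rop a b c 3 0 2 x z) (Rop a b c 3 1 2 y z)))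
        (mmul N 3 (Rop a b c 3 1 2 y z) (mmul N 3 (Rop a b c 3 0 2 x z) (Rop a b c 3 0 1 x y)))"
    and unitarity: "\<And>x y. opeq N 2 (mmul N 2 (Rop a b c 2 0 1 x y) (Rop a b c 2 1 0 y x)) idop"
    and sq_sq: "\<And>k x y. k < N \<Longrightarrow> (sq k x y)\<^sup>2 = a k x y"
    and sq_inv: "\<And>k x y. k < N \<Longrightarrow> sq k x y * sq k y x = 1"
    and h\<sigma>: "\<sigma> permutes {0..<L}"
  shows "opeq N L
           (mmul N L (relabel N L \<sigma> (Fop N L a b c sq (\<xi> \<circ> \<sigma>))) (Rsig N L a b c \<xi> \<sigma>))
           (Fop N L a b c sq \<xi>)"
  unfolding opeq_def
proof (intro ballI)
  interpret unitary_YBE N a b c by unfold_locales (fact unitarity, fact YBE)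
  fix xs ys assume xs: "xs \<in> tuples N L" and ys: "ys \<in> tuples N L"
  let ?u = "permute_list \<sigma> xs" and ?g = "sort xs" and ?H = "Rhat_perm N L a b c"
  have lx: "length xs = L" and u: "?u \<in> tuples N L"
    using xs h\<sigma> by (simp_all add: tuplesD permute_list_tuples)
  obtain r where r: "r permutes {0..<L}" "starcond L r xs" using starcond_exists[OF lx] by blast
  obtain t where t: "t permutes {0..<L}" "starcond L t ?u" using starcond_exists[of ?u L] lx by auto
  obtain p where p: "p permutes {0..<L}" "r \<circ> p = \<sigma> \<circ> t" "permute_list p ?g = ?g"
    using sorting_perms_quotient[OF h\<sigma> lx r t] .
  have g: "?g \<in> tuples N L" "sorted ?g"
    using permute_list_tuples[OF xs r(1)] starcond_sort[OF r(2,1) lx] by simp_all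
  have sort_u: "sort ?u = ?g"
    using sort_permute_list[of \<sigma> xs] h\<sigma> lx by (simp add: lessThan_atLeast0)
  have "mmul N L (relabel N L \<sigma> (Fop N L a b c sq (\<xi> \<circ> \<sigma>))) (Rsig N L a b c \<xi> \<sigma>) xs ys
      = Nfactor L sq ?u (\<xi> \<circ> \<sigma>) * mmul N L (?H (\<xi> \<circ> \<sigma>) t) (?H \<xi> \<sigma>) ?g ys"
    by (simp add: mmul_relabel_Rsig[OF h\<sigma> xs ys] mmul_Fop_left[OF u t] sort_u)
  also have "\<dots> = Nfactor L sq ?g ((\<xi> \<circ> r) \<circ> p) * mmul N L (?H (\<xi> \<circ> r) p) (?H \<xi> r) ?g ys"
    using Nfactor_sort[OF t, of sq "\<xi> \<circ> \<sigma>"] sort_u p(2) lx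
      Rhat_perm_comp[OF h\<sigma> t(1)] Rhat_perm_comp[OF r(1) p(1)]
    by (simp add: comp_assoc)
  also have "\<dots> = Nfactor L sq ?g (\<xi> \<circ> r) * ?H \<xi> r ?g ys"
    by (rule Rhat_perm_absorb[OF g p(1,3) ys sq_sq sq_inv])
  also have "\<dots> = Fop N L a b c sq \<xi> xs ys"
    by (simp add: Fop_entry[OF xs ys r] Nfactor_sort[OF r lx])
  finally show "mmul N L (relabel N L \<sigma> (Fop N L a b c sq (\<xi> \<circ> \<sigma>))) (Rsig N L a b c \<xi> \<sigma>) xs ys
      = Fop N L a b c sq \<xi> xs ys" .
qed

end
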